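(* Let $f:\mathbb{R}^2\to\mathbb{R}^2$, let $x^*\in\mathbb{R}^2$ with $f(x^* )=0$, and assume $f$ is continuously differentiable on a neighbourhood of $x^*$. Suppose $A=Df(x^* )=V^{-1}\begin{bmatrix}\mu&-\omega\\ \omega&\mu\end{bmatrix}V$ for an invertible $V\in\mathbb{R}^{2\times2}$ and reals $\mu>0$, $\omega\neq0$. Fix $\tau>0$, $\rho\in[0,1)$ and $\theta\in[0,2\pi)$, and put $$\epsilon_1=\frac{\rho\cos(\theta-\omega\tau)-\rho e^{\mu\tau}\cos(\theta-2\omega\tau)-e^{3\mu\tau}\cos(2\omega\tau)+e^{4\mu\tau}\cos(\omega\tau)}{\tau e^{\mu\tau}\big(1-2e^{\mu\tau}\cos(\omega\tau)+e^{2\mu\tau}\big)},$$ $$\epsilon_2=\frac{\rho\sin(\theta-\omega\tau)-\rho e^{\mu\tau}\sin(\theta-2\omega\tau)-e^{3\mu\tau}\sin(2\omega\tau)+e^{4\mu\tau}\sin(\omega\tau)}{\tau e^{\mu\tau}\big(1-2e^{\mu\tau}\cos(\omega\tau)+e^{2\mu\tau}\big)},$$ and $K=V^{-1}\begin{bmatrix}\epsilon_1&-\epsilon_2\\ \epsilon_2&\epsilon_1\end{bmatrix}V$. Then $x^*$ is a locally asymptotically stable equilibrium of the controlled system $$\dot x(t)=f(x(t))+K(t)\big(x(t-2\tau)-x(t-\tau)\big),\quad t\ge0,$$ where $K(t)=0_{2\times2}$ if $3k\tau\le t<(3k+2)\tau$ and $K(t)=K$ if $(3k+2)\tau\le t<(3k+3)\tau$,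 $k=0,1,2,\dots$.
   Context: Since $K(t)=0$ for $t\in[0,2\tau)$, a solution of the controlled system is determined by its initial value $x(0)$. "Locally asymptotically stable" means: for every $\eta>0$ there is $\delta>0$ such that every solution with $\|x(0)-x^*\|<\delta$ is defined for all $t\ge0$ and satisfies $\|x(t)-x^*\|<\eta$ for all $t\ge0$, and there is $\delta_0>0$ such that $\|x(0)-x^*\|<\delta_0$ implies $x(t)\to x^*$ as $t\to\infty$. *)

theory Defs
  imports "HOL-Analysis.Analysis"
begin

definition ctrl_gain :: "real^2^2 \<Rightarrow> real \<Rightarrow> real \<Rightarrow> real^2^2" where
  "ctrl_gain K \<tau> t =
     (if \<exists>k::nat. (3 * real k + 2) * \<tau> \<le> t \<and> t < (3 * real k + 3) * \<tau> then K else 0)"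

text \<open>A solution of x'(t) = f(x(t)) + K(t)(x(t-2tau) - x(t-tau)) on an interval S starting at 0:
  continuous on S with right derivative equal to the right-hand side at every t in S
  (K(t) is right-continuous and piecewise constant).\<close>
definition is_ctrl_solution ::
  "(real^2 \<Rightarrow> real^2) \<Rightarrow> real^2^2 \<Rightarrow> real \<Rightarrow> (real \<Rightarrow> real^2) \<Rightarrow> real set \<Rightarrow> bool" where
  "is_ctrl_solution f K \<tau> x S \<longleftrightarrow>
     continuous_on S x \<and>
     (\<forall>t\<in>S. (x has_vector_derivative
                 (f (x t) + ctrl_gain K \<tau> t *v (x (t - 2 * \<tau>) - x (t - \<tau>))))
               (at t within (S \<inter> {t..})))"

definition loc_asym_stable ::
  "(real^2 \<Rightarrow> real^2) \<Rightarrow> real^2^2 \<Rightarrow> real \<Rightarrow> real^2 \<Rightarrow> bool" where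
  "loc_asym_stable f K \<tau> xs \<longleftrightarrow>
     (\<forall>\<eta>>0. \<exists>\<delta>>0. \<forall>x0. norm (x0 - xs) < \<delta> \<longrightarrow>
        (\<exists>x. is_ctrl_solution f K \<tau> x {0..} \<and> x 0 = x0) \<and>
        (\<forall>T x. T > 0 \<and> is_ctrl_solution f K \<tau> x {0..<T} \<and> x 0 = x0 \<longrightarrow>
                (\<forall>t\<in>{0..<T}. norm (x t - xs) < \<eta>))) \<and>
     (\<exists>\<delta>0>0. \<forall>x. is_ctrl_solution f K \<tau> x {0..} \<and> norm (x 0 - xs) < \<delta>0 \<longrightarrow>
        (x \<longlongrightarrow> xs) at_top)"

end

theory Submission
  imports Defs
begin

(*
  In the coordinates z = P (x - xs), where P y is V y read as a complex number, Df(xs) becomes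
  multiplication by alpha = mu + i omega and K multiplication by eps = eps1 + i eps2, so the
  controlled system turns into the scalar equation z' = G z + kappa(t) (z(t - 2 tau) - z(t - tau))
  with G z = alpha z + o(z) and kappa(t) in {0, eps}.  On a period [3k tau, 3k tau + 3 tau] the
  gain is off for the first 2 tau and the delays only look back into the same period, so the
  linear equation maps z(3k tau) to m z(3k tau) with m = e^(3 alpha tau) + eps tau (e^(alpha tau)
  - e^(2 alpha tau)); the gain of the theorem is exactly the one with m = rho e^(i theta).

  If |G z - alpha z| <= eta |z| along the solution, a Gronwall estimate on each of the two parts
  of a period bounds the deviation from the linear period map by a constant times eta |z(3k tau)|,
  and the solution by a constant times |z(3k tau)| inside the period.  For small eta the period
  map therefore contracts by |m| + O(eta) < 1, so small solutions stay small (which keeps them in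
  the region where the estimate on G holds) and decay geometrically.  Solutions exist because on
  each period the equation is an ODE with continuous forcing, solved by Picard iteration for a
  globally Lipschitz modification of G.
*)

lemma continuous_induction_nonpos:
  fixes \<phi> :: "real \<Rightarrow> real"
  assumes ab: "a \<le> b" and cont: "continuous_on {a..b} \<phi>" and base: "\<phi> a \<le> 0"
    and step: "\<And>t. t \<in> {a..<b} \<Longrightarrow> \<phi> t \<le> 0 \<Longrightarrow> \<exists>d>0. \<forall>h. 0 < h \<and> h < d \<longrightarrow> \<phi> (t + h) \<le> 0"
    and t: "t \<in> {a..b}"
  shows "\<phi> t \<le> 0"
proof -
  define S where "S = {t\<in>{a..b}. \<forall>s\<in>{a..t}. \<phi> s \<le> 0}"
  define s where "s = Sup S"
  have aS: "a \<in> S" using base ab by (auto simp: S_def)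
  have bdd: "bdd_above S" by (auto simp: S_def bdd_above_def)
  have as: "a \<le> s" unfolding s_def using aS bdd by (rule cSup_upper)
  have sb: "s \<le> b" unfolding s_def using aS by (intro cSup_least) (auto simp: S_def)
  have below: "\<phi> t \<le> 0" if "a \<le> t" "t < s" for t
  proof -
    obtain x where "x \<in> S" "t < x"
      using \<open>t < s\<close> less_cSup_iff[OF _ bdd] aS unfolding s_def by blast
    then show ?thesis using that by (auto simp: S_def)
  qed
  have "\<phi> s \<le> 0"
  proof (rule ccontr)
    assume neg: "\<not> \<phi> s \<le> 0"
    then have "a < s" using base as by (cases "s = a") auto
    have "s \<in> {a..b}" using as sb by auto
    then obtain d where d: "d > 0" "\<forall>y\<in>{a..b}. dist y s < d \<longrightarrow> dist (\<phi> y) (\<phi> s) < \<phi> s"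
      using cont neg unfolding continuous_on_iff by (meson not_le)
    define y where "y = max a (s - d/2)"
    have "y \<in> {a..b}" "dist y s < d" "a \<le> y" "y < s"
      using d \<open>a < s\<close> sb by (auto simp: y_def dist_real_def)
    then have "dist (\<phi> y) (\<phi> s) < \<phi> s" "\<phi> y \<le> 0"
      using d(2) below[of y] by auto
    then show False by (simp add: dist_real_def)
  qed
  then have upto_s: "\<phi> x \<le> 0" if "x \<in> {a..s}" for x
    using below that by (cases "x = s") auto
  have "s = b"
  proof (rule ccontr)
    assume "s \<noteq> b"
    then obtain d where d: "d > 0" "\<forall>h. 0 < h \<and> h < d \<longrightarrow> \<phi> (s + h) \<le> 0"
      using step[of s] \<open>\<phi> s \<le> 0\<close> as sb by auto
    define s' where "s' = min b (s + d/2)"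
    have "s < s'" using d \<open>s \<noteq> b\<close> sb by (auto simp: s'_def)
    have "\<phi> x \<le> 0" if "x \<in> {a..s'}" for x
      using upto_s[of x] d(2)[rule_format, of "x - s"] that by (cases "x \<le> s") (auto simp: s'_def)
    then have "s' \<in> S" using \<open>s < s'\<close> as by (auto simp: S_def s'_def)
    then have "s' \<le> s" unfolding s_def using bdd by (rule cSup_upper)
    then show False using \<open>s < s'\<close> by auto
  qed
  then show ?thesis using upto_s t by auto
qed

lemma norm_le_right_of_derivative_less:
  fixes v :: "real \<Rightarrow> 'a::real_normed_vector"
  assumes v: "(v has_vector_derivative v') (at t within {t..b})"
    and \<beta>: "(\<beta> has_real_derivative \<beta>') (at t within {t..b})"
    and tb: "t < b" and le: "norm (v t) \<le> \<beta> t" and less: "norm v' < \<beta>'"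
  shows "\<exists>d>0. \<forall>h. 0 < h \<and> h < d \<longrightarrow> norm (v (t + h)) \<le> \<beta> (t + h)"
proof -
  define \<gamma> where "\<gamma> = \<beta>' - norm v'"
  have \<gamma>: "\<gamma>/2 > 0" using less by (simp add: \<gamma>_def)
  obtain d1 where d1: "d1 > 0" "\<forall>y\<in>{t..b}. norm (y - t) < d1 \<longrightarrow>
      norm (v y - v t - (y - t) *\<^sub>R v') \<le> \<gamma>/2 * norm (y - t)"
    using v[unfolded has_vector_derivative_def has_derivative_within_alt, THEN conjunct2,
        rule_format, OF \<gamma>] by blast
  obtain d2 where d2: "d2 > 0" "\<forall>y\<in>{t..b}. norm (y - t) < d2 \<longrightarrow>
      norm (\<beta> y - \<beta> t - (y - t) *\<^sub>R \<beta>') \<le> \<gamma>/2 * norm (y - t)"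
    using \<beta>[unfolded has_real_derivative_iff_has_vector_derivative has_vector_derivative_def
        has_derivative_within_alt, THEN conjunct2, rule_format, OF \<gamma>] by blast
  show ?thesis
  proof (intro exI[of _ "min (b - t) (min d1 d2)"] conjI allI impI)
    show "0 < min (b - t) (min d1 d2)" using tb d1 d2 by auto
    fix h assume h: "0 < h \<and> h < min (b - t) (min d1 d2)"
    then have y: "t + h \<in> {t..b}" "norm (t + h - t) < d1" "norm (t + h - t) < d2" by auto
    have v_lin: "norm (v (t + h) - v t - h *\<^sub>R v') \<le> \<gamma>/2 * h"
      using d1(2)[rule_format, OF y(1,2)] h by simp
    have \<beta>_lin: "\<bar>\<beta> (t + h) - \<beta> t - h * \<beta>'\<bar> \<le> \<gamma>/2 * h"
      using d2(2)[rule_format, OF y(1,3)] h by simp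
    have "norm (v (t + h)) \<le> norm (v t + h *\<^sub>R v') + norm (v (t + h) - v t - h *\<^sub>R v')"
      using norm_triangle_ineq[of "v t + h *\<^sub>R v'" "v (t + h) - v t - h *\<^sub>R v'"] by simp
    also have "\<dots> \<le> norm (v t) + norm (h *\<^sub>R v') + norm (v (t + h) - v t - h *\<^sub>R v')"
      using norm_triangle_ineq[of "v t" "h *\<^sub>R v'"] by simp
    also have "\<dots> \<le> \<beta> t + h * norm v' + \<gamma>/2 * h" using le v_lin h by simp
    also have "\<dots> = \<beta> t + h * \<beta>' - \<gamma>/2 * h" by (simp add: \<gamma>_def algebra_simps)
    also have "\<dots> \<le> \<beta> (t + h)" using \<beta>_lin by linarith
    finally show "norm (v (t + h)) \<le> \<beta> (t + h)" .
  qed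
qed

text \<open>The bound on \<open>v'\<close> is only required while \<open>v\<close> stays below the claimed bound plus
  \<open>\<sigma>\<close>, so the estimate can bootstrap itself when \<open>v'\<close> is only controlled near the origin.
  The exponent \<open>2p\<close> instead of \<open>p\<close> leaves room for a strict comparison.\<close>

lemma gronwall_bootstrap:
  fixes v :: "real \<Rightarrow> 'a::real_normed_vector"
  assumes ab: "a \<le> b" and cont: "continuous_on {a..b} v"
    and der: "\<And>t. t \<in> {a..<b} \<Longrightarrow> (v has_vector_derivative v' t) (at t within {t..b})"
    and p: "p > 0" and q: "q \<ge> 0" and c: "norm (v a) \<le> c" and \<sigma>: "\<sigma> > 0"
    and bound: "\<And>t. t \<in> {a..<b} \<Longrightarrow> norm (v t) < (c + q * (t - a)) * exp (2 * p * (t - a)) + \<sigma>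
                 \<Longrightarrow> norm (v' t) \<le> p * norm (v t) + q"
    and t: "t \<in> {a..b}"
  shows "norm (v t) \<le> (c + q * (t - a)) * exp (2 * p * (t - a))"
proof (rule field_le_epsilon)
  define E where "E = exp (2 * p * (b - a))"
  have E: "E > 0" by (simp add: E_def)
  fix e :: real assume e: "e > 0"
  define s where "s = min (e / E) (\<sigma> / (2 * E))"
  have s: "s > 0" "s * E \<le> e" "s * E < \<sigma>"
    using E e \<sigma> by (auto simp: s_def min_def field_simps)
  define \<beta> where "\<beta> t = (c + q * (t - a) + s) * exp (2 * p * (t - a))" for t
  have \<beta>_split: "\<beta> t = (c + q * (t - a)) * exp (2 * p * (t - a)) + s * exp (2 * p * (t - a))" for t
    by (simp add: \<beta>_def algebra_simps)
  have s_exp_le: "s * exp (2 * p * (t - a)) \<le> s * E" if "t \<le> b" for t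
    using that p s by (simp add: E_def)
  have \<beta>_ge: "\<beta> t \<ge> s" if "t \<in> {a..b}" for t
  proof -
    have "c \<ge> 0" using c norm_ge_zero order_trans by blast
    then have "s \<le> c + q * (t - a) + s" using q that by simp
    also have "\<dots> \<le> (c + q * (t - a) + s) * exp (2 * p * (t - a))"
      using s calculation p that by (intro mult_le_cancel_left1[THEN iffD2]) auto
    finally show ?thesis by (simp add: \<beta>_def)
  qed
  have "norm (v t) - \<beta> t \<le> 0"
  proof (rule continuous_induction_nonpos[OF ab _ _ _ t])
    show "continuous_on {a..b} (\<lambda>t. norm (v t) - \<beta> t)"
      unfolding \<beta>_def by (intro continuous_intros cont)
    show "norm (v a) - \<beta> a \<le> 0" using c s by (simp add: \<beta>_def)
    fix t assume t: "t \<in> {a..<b}" and le: "norm (v t) - \<beta> t \<le> 0"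
    have "s * exp (2 * p * (t - a)) \<le> s * E" using t by (intro s_exp_le) auto
    then have "norm (v t) < (c + q * (t - a)) * exp (2 * p * (t - a)) + \<sigma>"
      using le s \<beta>_split[of t] by linarith
    then have "norm (v' t) \<le> p * norm (v t) + q" using bound[OF t] by blast
    moreover have "p * norm (v t) \<le> p * \<beta> t" using le p by simp
    ultimately have v': "norm (v' t) \<le> p * \<beta> t + q" by linarith
    have d\<beta>: "(\<beta> has_real_derivative q * exp (2 * p * (t - a)) + 2 * p * \<beta> t) (at t within {t..b})"
      unfolding \<beta>_def by (auto intro!: derivative_eq_intros simp: algebra_simps)
    have "norm (v' t) < q * exp (2 * p * (t - a)) + 2 * p * \<beta> t"
    proof -
      have "q \<le> q * exp (2 * p * (t - a))" using q p t by (simp add: mult_le_cancel_left1)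
      moreover have "0 < p * \<beta> t" using p \<beta>_ge[of t] s t by simp
      ultimately show ?thesis using v' by linarith
    qed
    from norm_le_right_of_derivative_less[OF der[OF t] d\<beta> _ _ this]
    show "\<exists>d>0. \<forall>h. 0 < h \<and> h < d \<longrightarrow> norm (v (t + h)) - \<beta> (t + h) \<le> 0"
      using t le by simp
  qed
  moreover have "\<beta> t \<le> (c + q * (t - a)) * exp (2 * p * (t - a)) + s * E"
    using s_exp_le[of t] t \<beta>_split[of t] by auto
  ultimately show "norm (v t) \<le> (c + q * (t - a)) * exp (2 * p * (t - a)) + e"
    using s by linarith
qed

lemma has_integral_power_over_fact:
  fixes a t :: real
  assumes "a \<le> t"
  shows "((\<lambda>s. C * (s - a) ^ n / fact n) has_integral C * (t - a) ^ Suc n / fact (Suc n)) {a..t}"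
proof -
  have "((\<lambda>s. C * (s - a) ^ n / fact n) has_integral
      C * (t - a) ^ Suc n / fact (Suc n) - C * (a - a) ^ Suc n / fact (Suc n)) {a..t}"
  proof (rule fundamental_theorem_of_calculus[OF assms])
    fix x assume "x \<in> {a..t}"
    have "((\<lambda>s. (s - a) ^ Suc n) has_real_derivative (1 + real n) * (1 * (x - a) ^ n))
        (at x within {a..t})"
      by (intro DERIV_power_Suc derivative_eq_intros) auto
    then have "((\<lambda>s. C * (s - a) ^ Suc n / fact (Suc n)) has_real_derivative
        C * ((1 + real n) * (1 * (x - a) ^ n)) / fact (Suc n)) (at x within {a..t})"
      by (intro DERIV_cdivide DERIV_cmult)
    also have "C * ((1 + real n) * (1 * (x - a) ^ n)) / fact (Suc n)
        = ((1 + real n) * (C * (x - a) ^ n)) / ((1 + real n) * fact n)"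
      by (simp add: ac_simps)
    also have "\<dots> = C * (x - a) ^ n / fact n"
      by (rule nonzero_mult_divide_mult_cancel_left) linarith
    finally show "((\<lambda>s. C * (s - a) ^ Suc n / fact (Suc n)) has_vector_derivative
        C * (x - a) ^ n / fact n) (at x within {a..t})"
      by (simp add: has_real_derivative_iff_has_vector_derivative)
  qed
  then show ?thesis by simp
qed

primrec picard_iterate :: "('a::banach \<Rightarrow> 'a) \<Rightarrow> (real \<Rightarrow> 'a) \<Rightarrow> real \<Rightarrow> 'a \<Rightarrow> nat \<Rightarrow> real \<Rightarrow> 'a"
  where
    "picard_iterate F h a init 0 = (\<lambda>t. init)"
  | "picard_iterate F h a init (Suc n) =
      (\<lambda>t. init + integral {a..t} (\<lambda>s. F (picard_iterate F h a init n s) + h s))"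

context
  fixes F :: "'a::banach \<Rightarrow> 'a" and h :: "real \<Rightarrow> 'a" and a b L :: real and init :: 'a
  assumes lip: "L-lipschitz_on UNIV F" and h: "continuous_on {a..b} h" and ab: "a \<le> b"
begin

abbreviation "\<phi> \<equiv> picard_iterate F h a init"

lemma continuous_on_picard_integrand:
  "continuous_on {a..b} w \<Longrightarrow> continuous_on {a..b} (\<lambda>s. F (w s) + h s)"
  using continuous_on_compose2[OF lipschitz_on_continuous_on[OF lip], of _ w]
  by (intro continuous_intros h) auto

lemma picard_integrand_integrable:
  "continuous_on {a..b} w \<Longrightarrow> t \<in> {a..b} \<Longrightarrow> (\<lambda>s. F (w s) + h s) integrable_on {a..t}"
  by (rule integrable_continuous_real, rule continuous_on_subset[OF continuous_on_picard_integrand])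
    auto

lemma has_vector_derivative_picard_integral:
  assumes "continuous_on {a..b} w" "t \<in> {a..b}"
  shows "((\<lambda>t. init + integral {a..t} (\<lambda>s. F (w s) + h s)) has_vector_derivative F (w t) + h t)
    (at t within {a..b})"
  using integral_has_vector_derivative[OF continuous_on_picard_integrand[OF assms(1)] assms(2)]
  by (auto intro: derivative_eq_intros)

lemma continuous_on_picard_iterate: "continuous_on {a..b} (\<phi> n)"
proof (induction n)
  case (Suc n)
  show ?case
    using continuous_on_vector_derivative[OF has_vector_derivative_picard_integral[OF Suc]]
    by simp
qed simp

lemma picard_iterate_step_bound:
  obtains M where "\<And>n t. t \<in> {a..b} \<Longrightarrow> norm (\<phi> (Suc n) t - \<phi> n t) \<le> M * (L * (t - a)) ^ n / fact n"
proof -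
  have "compact ((\<lambda>t. \<phi> 1 t - \<phi> 0 t) ` {a..b})"
    by (intro compact_continuous_image continuous_intros continuous_on_picard_iterate) auto
  then have "bounded ((\<lambda>t. \<phi> 1 t - \<phi> 0 t) ` {a..b})" by (rule compact_imp_bounded)
  then obtain M where "\<forall>x \<in> (\<lambda>t. \<phi> 1 t - \<phi> 0 t) ` {a..b}. norm x \<le> M"
    unfolding bounded_iff by blast
  then have M: "\<And>t. t \<in> {a..b} \<Longrightarrow> norm (\<phi> 1 t - \<phi> 0 t) \<le> M" by blast
  have L: "L \<ge> 0" using lipschitz_on_nonneg[OF lip] .
  have "norm (\<phi> (Suc n) t - \<phi> n t) \<le> M * (L * (t - a)) ^ n / fact n" if "t \<in> {a..b}" for n t
    using that
  proof (induction n arbitrary: t)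
    case 0
    then show ?case using M by simp
  next
    case (Suc n)
    let ?g = "\<lambda>k s. F (\<phi> k s) + h s"
    have "\<phi> (Suc m) t = init + integral {a..t} (?g m)" for m by simp
    then have "\<phi> (Suc (Suc n)) t - \<phi> (Suc n) t = integral {a..t} (?g (Suc n)) - integral {a..t} (?g n)"
      by simp
    also have "\<dots> = integral {a..t} (\<lambda>s. ?g (Suc n) s - ?g n s)"
      using picard_integrand_integrable[OF continuous_on_picard_iterate Suc.prems]
      by (simp only: integral_diff)
    also have "norm \<dots> \<le> integral {a..t} (\<lambda>s. L * M * L ^ n * (s - a) ^ n / fact n)"
    proof (rule integral_norm_bound_integral)
      show "(\<lambda>s. ?g (Suc n) s - ?g n s) integrable_on {a..t}"
        using picard_integrand_integrable[OF continuous_on_picard_iterate Suc.prems]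
        by (intro integrable_diff)
      show "(\<lambda>s. L * M * L ^ n * (s - a) ^ n / fact n) integrable_on {a..t}"
        by (rule has_integral_integrable[OF has_integral_power_over_fact]) (use Suc.prems in auto)
      fix s assume "s \<in> {a..t}"
      then have "norm (\<phi> (Suc n) s - \<phi> n s) \<le> M * (L * (s - a)) ^ n / fact n"
        using Suc by auto
      then have "L * norm (\<phi> (Suc n) s - \<phi> n s) \<le> L * (M * (L * (s - a)) ^ n / fact n)"
        using L by (rule mult_left_mono)
      then have "L * norm (\<phi> (Suc n) s - \<phi> n s) \<le> L * M * L ^ n * (s - a) ^ n / fact n"
        by (simp add: power_mult_distrib)
      then show "norm (?g (Suc n) s - ?g n s) \<le> L * M * L ^ n * (s - a) ^ n / fact n"
        using lipschitz_on_normD[OF lip, of "\<phi> (Suc n) s" "\<phi> n s"] by simp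
    qed
    also have "\<dots> = L * M * L ^ n * (t - a) ^ Suc n / fact (Suc n)"
      by (rule integral_unique[OF has_integral_power_over_fact]) (use Suc.prems in auto)
    also have "\<dots> = M * (L * (t - a)) ^ Suc n / fact (Suc n)"
      by (simp add: power_mult_distrib)
    finally show ?case .
  qed
  then show ?thesis using that by blast
qed

lemma picard_iterate_uniform_limit: "\<exists>\<psi>. uniform_limit {a..b} \<phi> \<psi> sequentially"
proof -
  obtain M where M: "\<And>n t. t \<in> {a..b} \<Longrightarrow> norm (\<phi> (Suc n) t - \<phi> n t) \<le> M * (L * (t - a)) ^ n / fact n"
    using picard_iterate_step_bound by blast
  have L: "L \<ge> 0" using lipschitz_on_nonneg[OF lip] .
  have M_b: "norm (\<phi> (Suc n) t - \<phi> n t) \<le> M * (L * (b - a)) ^ n / fact n" if "t \<in> {a..b}" for n t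
  proof -
    have "M \<ge> 0" using order_trans[OF norm_ge_zero M[OF that, of 0]] by simp
    moreover have "(L * (t - a)) ^ n \<le> (L * (b - a)) ^ n"
      using that L by (intro power_mono mult_left_mono) auto
    ultimately show ?thesis
      using M[OF that, of n] by (smt (verit) divide_right_mono fact_ge_zero mult_left_mono)
  qed
  have "summable (\<lambda>n. M * (L * (b - a)) ^ n / fact n)"
    using summable_mult[OF summable_exp[of "L * (b - a)"], of M] by (simp add: field_simps)
  from Weierstrass_m_test[OF M_b this]
  have "uniform_limit {a..b} (\<lambda>n t. init + (\<Sum>i<n. \<phi> (Suc i) t - \<phi> i t))
      (\<lambda>t. init + (\<Sum>i. \<phi> (Suc i) t - \<phi> i t)) sequentially"
    by (intro uniform_limit_intros)
  moreover have "(\<lambda>n t. init + (\<Sum>i<n. \<phi> (Suc i) t - \<phi> i t)) = \<phi>"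
    using sum_lessThan_telescope[of "\<lambda>i. \<phi> i _"] by (simp del: picard_iterate.simps(2))
  ultimately show ?thesis by auto
qed

theorem picard_existence:
  "\<exists>v. continuous_on {a..b} v \<and> v a = init \<and>
     (\<forall>t\<in>{a..b}. (v has_vector_derivative F (v t) + h t) (at t within {a..b}))"
proof -
  obtain \<psi> where \<psi>: "uniform_limit {a..b} \<phi> \<psi> sequentially"
    using picard_iterate_uniform_limit by blast
  have \<psi>_cont: "continuous_on {a..b} \<psi>"
    by (rule uniform_limit_theorem[OF _ \<psi>]) (auto simp: continuous_on_picard_iterate)
  have fixpoint: "\<psi> t = init + integral {a..t} (\<lambda>s. F (\<psi> s) + h s)" if t: "t \<in> {a..b}" for t
  proof -
    have "uniform_limit {a..t} \<phi> \<psi> sequentially"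
      using uniform_limit_on_subset[OF \<psi>] t by auto
    then have "uniform_limit {a..t} (\<lambda>n s. F (\<phi> n s)) (F \<circ> \<psi>) sequentially"
      by (rule uniform_limit_compose[OF _ lipschitz_on_uniformly_continuous[OF lip]]) auto
    from uniform_limit_add[OF this uniform_limit_const[where c=h]]
    have "uniform_limit {a..t} (\<lambda>n s. F (\<phi> n s) + h s) (\<lambda>s. F (\<psi> s) + h s) sequentially"
      by (simp add: o_def)
    moreover have "continuous_on {a..t} (\<lambda>s. F (\<phi> n s) + h s)" for n
      by (rule continuous_on_subset[OF continuous_on_picard_integrand[OF continuous_on_picard_iterate]])
        (use t in auto)
    ultimately obtain I J where
      I: "\<And>n. ((\<lambda>s. F (\<phi> n s) + h s) has_integral I n) {a..t}" and
      J: "((\<lambda>s. F (\<psi> s) + h s) has_integral J) {a..t}" and IJ: "I \<longlonglongrightarrow> J"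
      by (rule uniform_limit_integral) auto
    have "(\<lambda>n. \<phi> (Suc n) t) \<longlonglongrightarrow> init + J"
      using tendsto_add[OF tendsto_const IJ, of init] I[THEN integral_unique] by simp
    moreover have "(\<lambda>n. \<phi> (Suc n) t) \<longlonglongrightarrow> \<psi> t"
      using LIMSEQ_Suc[OF tendsto_uniform_limitI[OF \<psi> t]] .
    ultimately show ?thesis using J LIMSEQ_unique by (metis integral_unique)
  qed
  show ?thesis
  proof (intro exI[of _ \<psi>] conjI ballI)
    show "\<psi> a = init" using fixpoint[of a] ab by simp
    fix t assume t: "t \<in> {a..b}"
    show "(\<psi> has_vector_derivative F (\<psi> t) + h t) (at t within {a..b})"
      by (rule has_vector_derivative_transform[OF t _ has_vector_derivative_picard_integral[OF \<psi>_cont t]])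
        (simp add: fixpoint)
  qed (fact \<psi>_cont)
qed

end

lemma lipschitz_on_UNIV_comp_closest_point:
  fixes G :: "'a::euclidean_space \<Rightarrow> 'b::metric_space"
  assumes lip: "L-lipschitz_on (cball c r) G" and r: "0 \<le> r"
  shows "L-lipschitz_on UNIV (\<lambda>z. G (closest_point (cball c r) z))"
proof -
  have "1-lipschitz_on UNIV (closest_point (cball c r))"
    using closest_point_lipschitz[of "cball c r"] r by (intro lipschitz_onI) auto
  moreover have "L-lipschitz_on (closest_point (cball c r) ` UNIV) G"
    using closest_point_in_set[of "cball c r"] r by (intro lipschitz_on_subset[OF lip]) auto
  ultimately show ?thesis using lipschitz_on_compose2 by fastforce
qed

lemma near_linear_of_has_derivative:
  fixes G :: "'a::real_normed_vector \<Rightarrow> 'b::real_normed_vector"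
  assumes "(G has_derivative L) (at 0)" "G 0 = 0" "\<eta> > 0"
  shows "\<exists>r>0. \<forall>z. norm z \<le> r \<longrightarrow> norm (G z - L z) \<le> \<eta> * norm z"
proof -
  obtain d where "d > 0" "\<And>z. norm z < d \<Longrightarrow> norm (G z - L z) \<le> \<eta> * norm z"
    using assms unfolding has_derivative_at_alt by force
  then show ?thesis by (intro exI[of _ "d / 2"]) auto
qed

lemma lipschitz_on_cball_of_continuous_derivative:
  fixes f :: "real^'n \<Rightarrow> real^'m"
  assumes "open U" "x \<in> U" "continuous_on U Df" "\<forall>y\<in>U. (f has_derivative (\<lambda>h. Df y *v h)) (at y)"
  obtains r L where "r > 0" "L-lipschitz_on (cball x r) f"
proof -
  obtain r where r: "r > 0" "cball x r \<subseteq> U" using assms(1,2) open_contains_cball by blast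
  have "compact (Df ` cball x r)"
    by (intro compact_continuous_image continuous_on_subset[OF assms(3) r(2)]) auto
  then obtain M where M: "M > 0" "\<And>y. y \<in> cball x r \<Longrightarrow> norm (Df y) \<le> M"
    using compact_imp_bounded bounded_pos by (metis image_eqI)
  have "(real CARD('m) * real CARD('n) * M)-lipschitz_on (cball x r) f"
  proof (rule bounded_derivative_imp_lipschitz)
    fix y assume y: "y \<in> cball x r"
    then have "y \<in> U" using r(2) by auto
    then show "(f has_derivative (*v) (Df y)) (at y within cball x r)"
      using assms(4) by (simp add: has_derivative_at_withinI)
    show "onorm ((*v) (Df y)) \<le> real CARD('m) * real CARD('n) * M"
    proof (rule onorm_le_matrix_component)
      fix i j
      have "\<bar>Df y $ i $ j\<bar> \<le> norm (Df y $ i)" by (rule component_le_norm_cart)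
      also have "\<dots> \<le> norm (Df y)" by (rule Finite_Cartesian_Product.norm_nth_le)
      finally show "\<bar>Df y $ i $ j\<bar> \<le> M" using M(2)[OF y] by linarith
    qed
  qed (use M in auto)
  then show ?thesis using r(1) that by blast
qed

lemma has_vector_derivative_exp_scaleR_diff:
  fixes z :: complex
  shows "((\<lambda>t. exp ((c - t) *\<^sub>R z)) has_vector_derivative - (z * exp ((c - t) *\<^sub>R z))) (at t within S)"
proof -
  have "((\<lambda>w. exp ((of_real c - w) * z)) has_field_derivative - (z * exp ((of_real c - of_real t) * z)))
      (at (of_real t))"
    by (auto intro!: derivative_eq_intros simp: algebra_simps)
  from has_vector_derivative_real_field[OF this] show ?thesis
    by (simp add: scaleR_conv_of_real)
qed

lemma exp_scaleR_mult: "exp (x *\<^sub>R z) * exp (y *\<^sub>R z) = exp ((x + y) *\<^sub>R (z::complex))"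
  by (simp add: exp_add[symmetric] scaleR_add_left)

lemma exp_scaleR_Complex: "exp (x *\<^sub>R Complex a b) = complex_of_real (exp (x * a)) * cis (x * b)"
  by (simp add: exp_eq_polar scaleR_complex.ctr)

lemma has_vector_derivative_shift:
  fixes f :: "real \<Rightarrow> 'a::real_normed_vector"
  assumes "(f has_vector_derivative f') (at (t - c) within {t - c..b - c})"
  shows "((\<lambda>s. f (s - c)) has_vector_derivative f') (at t within {t..b})"
proof -
  have "((\<lambda>s. s - c) has_vector_derivative 1) (at t within {t..b})"
    by (auto intro!: derivative_eq_intros simp: has_real_derivative_iff_has_vector_derivative[symmetric])
  moreover have "(\<lambda>s. s - c) ` {t..b} = {t - c..b - c}" by simp
  ultimately show ?thesis using vector_diff_chain_within[of "\<lambda>s. s - c" 1 t "{t..b}" f f'] assms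
    by (simp add: o_def)
qed

lemma at_within_Icc_right: "t < b \<Longrightarrow> at t within {t..b} = at t within {t..}"
  for t b :: real
  by (rule at_within_nhd[of t "{..<b}"]) auto

section \<open>The switching schedule\<close>

definition gain_active :: "real \<Rightarrow> real \<Rightarrow> bool" where
  "gain_active \<tau> t \<longleftrightarrow> (\<exists>k::nat. (3 * real k + 2) * \<tau> \<le> t \<and> t < (3 * real k + 3) * \<tau>)"

lemma ctrl_gain_eq: "ctrl_gain K \<tau> t = (if gain_active \<tau> t then K else 0)"
  by (simp add: ctrl_gain_def gain_active_def)

definition period_index :: "real \<Rightarrow> real \<Rightarrow> nat" where
  "period_index \<tau> t = nat \<lfloor>t / (3 * \<tau>)\<rfloor>"

lemma period_index_bounds:
  assumes "\<tau> > 0" "t \<ge> 0"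
  shows "3 * real (period_index \<tau> t) * \<tau> \<le> t" "t < 3 * real (period_index \<tau> t) * \<tau> + 3 * \<tau>"
proof -
  have k: "real (period_index \<tau> t) = of_int \<lfloor>t / (3 * \<tau>)\<rfloor>"
    using assms by (simp add: period_index_def)
  show "3 * real (period_index \<tau> t) * \<tau> \<le> t" "t < 3 * real (period_index \<tau> t) * \<tau> + 3 * \<tau>"
    using floor_divide_lower[of "3 * \<tau>" t] floor_divide_upper[of "3 * \<tau>" t] assms(1)
    unfolding k by (simp_all add: algebra_simps)
qed

lemma period_index_eqI:
  assumes "\<tau> > 0" "3 * real k * \<tau> \<le> t" "t < 3 * real k * \<tau> + 3 * \<tau>"
  shows "period_index \<tau> t = k"
proof -
  have "real k \<le> t / (3 * \<tau>)" "t / (3 * \<tau>) < real k + 1"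
    using assms by (simp_all add: field_simps)
  then have "\<lfloor>t / (3 * \<tau>)\<rfloor> = int k" by (simp add: floor_eq_iff)
  then show ?thesis by (simp add: period_index_def)
qed

lemma gain_active_iff:
  assumes "\<tau> > 0" "3 * real k * \<tau> \<le> t" "t < 3 * real k * \<tau> + 3 * \<tau>"
  shows "gain_active \<tau> t \<longleftrightarrow> 3 * real k * \<tau> + 2 * \<tau> \<le> t"
proof
  assume "gain_active \<tau> t"
  then obtain j where j: "(3 * real j + 2) * \<tau> \<le> t" "t < (3 * real j + 3) * \<tau>"
    by (auto simp: gain_active_def)
  then have "period_index \<tau> t = j"
    using assms(1) by (intro period_index_eqI) (auto simp: algebra_simps)
  moreover have "period_index \<tau> t = k" using assms by (rule period_index_eqI)
  ultimately show "3 * real k * \<tau> + 2 * \<tau> \<le> t" using j by (simp add: algebra_simps)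
next
  assume "3 * real k * \<tau> + 2 * \<tau> \<le> t"
  then show "gain_active \<tau> t"
    using assms unfolding gain_active_def by (intro exI[of _ k]) (simp add: algebra_simps)
qed

lemma filterlim_period_index:
  assumes \<tau>: "\<tau> > 0"
  shows "filterlim (period_index \<tau>) sequentially at_top"
  unfolding filterlim_at_top
proof
  fix N :: nat
  show "\<forall>\<^sub>F t in at_top. N \<le> period_index \<tau> t"
    using eventually_ge_at_top[of "3 * real N * \<tau>"]
  proof eventually_elim
    case (elim t)
    have "0 \<le> 3 * real N * \<tau>" using \<tau> by simp
    then have "t \<ge> 0" using elim by linarith
    then have "3 * real N * \<tau> < 3 * real (Suc (period_index \<tau> t)) * \<tau>"
      using period_index_bounds(2)[OF \<tau> \<open>t \<ge> 0\<close>] elim by (simp add: algebra_simps)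
    then show ?case using \<tau> by simp
  qed
qed

section \<open>The scalar equation in complex coordinates\<close>

definition is_complex_ctrl_solution ::
  "(complex \<Rightarrow> complex) \<Rightarrow> complex \<Rightarrow> real \<Rightarrow> (real \<Rightarrow> complex) \<Rightarrow> real set \<Rightarrow> bool" where
  "is_complex_ctrl_solution F \<epsilon> \<tau> u S \<longleftrightarrow> continuous_on S u \<and>
     (\<forall>t\<in>S. (u has_vector_derivative
               F (u t) + (if gain_active \<tau> t then \<epsilon> else 0) * (u (t - 2 * \<tau>) - u (t - \<tau>)))
             (at t within S \<inter> {t..}))"

text \<open>The value at \<open>3\<tau>\<close> of the solution of the linear equation
  \<open>z' = \<alpha> z + \<kappa>(t) (z(t - 2\<tau>) - z(t - \<tau>))\<close> with \<open>z(0) = 1\<close>.\<close>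
definition monodromy :: "real \<Rightarrow> complex \<Rightarrow> complex \<Rightarrow> complex" where
  "monodromy \<tau> \<alpha> \<epsilon> = exp ((3 * \<tau>) *\<^sub>R \<alpha>) + \<epsilon> * \<tau> * (exp (\<tau> *\<^sub>R \<alpha>) - exp ((2 * \<tau>) *\<^sub>R \<alpha>))"

definition flow_deviation :: "complex \<Rightarrow> (real \<Rightarrow> complex) \<Rightarrow> real \<Rightarrow> real \<Rightarrow> complex" where
  "flow_deviation \<alpha> u s t = exp ((s - t) *\<^sub>R \<alpha>) * u t - u s"

lemma flow_deviation_self [simp]: "flow_deviation \<alpha> u s s = 0"
  by (simp add: flow_deviation_def)

lemma norm_modulated_le_flow_deviation:
  "norm (exp ((s - t) *\<^sub>R \<alpha>) * u t) \<le> norm (flow_deviation \<alpha> u s t) + norm (u s)"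
  using norm_triangle_ineq[of "flow_deviation \<alpha> u s t" "u s"] by (simp add: flow_deviation_def)

lemma modulated_delay_eq:
  "exp ((s - t) *\<^sub>R \<alpha>) * u (t - c) = exp ((- c) *\<^sub>R \<alpha>) * (flow_deviation \<alpha> u s (t - c) + u s)"
proof -
  have e: "exp ((- c) *\<^sub>R \<alpha>) * exp ((s - (t - c)) *\<^sub>R \<alpha>) = exp ((s - t) *\<^sub>R \<alpha>)"
    unfolding exp_scaleR_mult by simp
  show ?thesis unfolding flow_deviation_def by (simp only: diff_add_cancel mult.assoc[symmetric] e)
qed

text \<open>Constants of the one-period estimates below; all that matters is that they do not depend
  on the size \<open>\<eta>\<close> of the nonlinearity or on the radius \<open>r\<close> where it is controlled.\<close>

definition free_drift_const :: "real \<Rightarrow> real" where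
  "free_drift_const \<tau> = 2 * \<tau> * exp (4 * \<tau>)"

definition ctrl_drift_const :: "real \<Rightarrow> complex \<Rightarrow> real" where
  "ctrl_drift_const \<tau> \<epsilon> =
     (free_drift_const \<tau> + \<tau> * (1 + 2 * norm \<epsilon> * \<tau> + 2 * norm \<epsilon> * free_drift_const \<tau>)) * exp (2 * \<tau>)"

definition period_growth_const :: "real \<Rightarrow> complex \<Rightarrow> complex \<Rightarrow> real" where
  "period_growth_const \<tau> \<alpha> \<epsilon> = exp (3 * \<tau> * Re \<alpha>) * (1 + 2 * norm \<epsilon> * \<tau> + ctrl_drift_const \<tau> \<epsilon>)"

lemma ctrl_drift_const_pos: "\<tau> > 0 \<Longrightarrow> ctrl_drift_const \<tau> \<epsilon> > 0"
  by (simp add: ctrl_drift_const_def free_drift_const_def add_pos_nonneg)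

lemma period_growth_const_pos: "\<tau> > 0 \<Longrightarrow> period_growth_const \<tau> \<alpha> \<epsilon> > 0"
  using ctrl_drift_const_pos[of \<tau> \<epsilon>] by (simp add: period_growth_const_def add_pos_nonneg)

lemma free_drift_le_ctrl_drift: "\<tau> > 0 \<Longrightarrow> free_drift_const \<tau> \<le> ctrl_drift_const \<tau> \<epsilon>"
proof -
  assume "\<tau> > 0"
  then have "free_drift_const \<tau> * 1 \<le>
      (free_drift_const \<tau> + \<tau> * (1 + 2 * norm \<epsilon> * \<tau> + 2 * norm \<epsilon> * free_drift_const \<tau>)) * exp (2 * \<tau>)"
    by (intro mult_mono) (auto simp: free_drift_const_def)
  then show ?thesis by (simp add: ctrl_drift_const_def)
qed

locale near_linear_ctrl =
  fixes \<tau> :: real and \<alpha> \<epsilon> :: complex and F :: "complex \<Rightarrow> complex" and \<eta> r :: real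
  assumes tau_pos: "\<tau> > 0" and Re_nonneg: "0 \<le> Re \<alpha>" and eta: "0 < \<eta>" "\<eta> \<le> 1"
    and r_pos: "r > 0"
    and near_linear: "\<And>z. norm z \<le> r \<Longrightarrow> norm (F z - \<alpha> * z) \<le> \<eta> * norm z"
begin

abbreviation "D1 \<equiv> free_drift_const \<tau>"
abbreviation "D2 \<equiv> ctrl_drift_const \<tau> \<epsilon>"
abbreviation "Cb \<equiv> period_growth_const \<tau> \<alpha> \<epsilon>"
abbreviation "\<Delta> \<equiv> exp ((- 2 * \<tau>) *\<^sub>R \<alpha>) - exp ((- \<tau>) *\<^sub>R \<alpha>)"
abbreviation "\<sigma> \<equiv> r / (2 * exp (3 * \<tau> * Re \<alpha>))"

lemma modulated_defect_le:
  "norm z \<le> r \<Longrightarrow> norm (exp (x *\<^sub>R \<alpha>) * (F z - \<alpha> * z)) \<le> \<eta> * norm (exp (x *\<^sub>R \<alpha>) * z)"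
  using near_linear[of z] by (simp add: norm_mult)

lemma norm_exp_neg_le_1: "0 \<le> x \<Longrightarrow> norm (exp ((- x) *\<^sub>R \<alpha>)) \<le> 1"
  using Re_nonneg by (simp add: mult_nonneg_nonneg)

lemma norm_le_modulated:
  assumes "0 \<le> x" "x \<le> 3 * \<tau>"
  shows "norm z \<le> exp (3 * \<tau> * Re \<alpha>) * norm (exp ((- x) *\<^sub>R \<alpha>) * z)"
proof -
  have "norm z = exp (x * Re \<alpha>) * (exp (- (x * Re \<alpha>)) * norm z)"
    by (simp add: exp_minus_inverse mult.assoc[symmetric])
  also have "\<dots> = exp (x * Re \<alpha>) * norm (exp ((- x) *\<^sub>R \<alpha>) * z)"
    by (simp add: norm_mult)
  also have "\<dots> \<le> exp (3 * \<tau> * Re \<alpha>) * norm (exp ((- x) *\<^sub>R \<alpha>) * z)"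
    using assms Re_nonneg by (intro mult_right_mono) (auto intro: mult_right_mono)
  finally show ?thesis .
qed

lemma free_drift_factor_le: "0 \<le> x \<Longrightarrow> x \<le> 2 * \<tau> \<Longrightarrow> x * exp (2 * \<eta> * x) \<le> D1"
proof -
  assume x: "0 \<le> x" "x \<le> 2 * \<tau>"
  then have "\<eta> * x \<le> 1 * (2 * \<tau>)" using eta by (intro mult_mono) auto
  then have "exp (2 * \<eta> * x) \<le> exp (4 * \<tau>)" by simp
  then show ?thesis using x by (auto simp: free_drift_const_def intro: mult_mono)
qed

lemma norm_delay_difference_le: "norm \<Delta> \<le> 2"
proof -
  have "norm (exp ((- 2 * \<tau>) *\<^sub>R \<alpha>)) \<le> 1" "norm (exp ((- \<tau>) *\<^sub>R \<alpha>)) \<le> 1"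
    using norm_exp_neg_le_1[of "2 * \<tau>"] norm_exp_neg_le_1[of \<tau>] tau_pos by simp_all
  then show ?thesis
    using norm_triangle_ineq4[of "exp ((- 2 * \<tau>) *\<^sub>R \<alpha>)" "exp ((- \<tau>) *\<^sub>R \<alpha>)"] by linarith
qed

lemma norm_ctrl_drift_term_le:
  assumes "0 \<le> x" "x \<le> \<tau>"
  shows "norm (x *\<^sub>R (\<epsilon> * \<Delta> * z)) \<le> 2 * norm \<epsilon> * \<tau> * norm z"
proof -
  have "norm (x *\<^sub>R (\<epsilon> * \<Delta> * z)) \<le> \<tau> * (norm \<epsilon> * 2 * norm z)"
    using assms norm_delay_difference_le by (auto simp: norm_mult intro!: mult_mono)
  then show ?thesis by (simp add: algebra_simps)
qed

lemma ctrl_gronwall_bound_le: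
  assumes x: "0 \<le> x" "x \<le> \<tau>" and A: "0 \<le> A"
  shows "(\<eta> * D1 * A + \<eta> * A * (1 + 2 * norm \<epsilon> * \<tau> + 2 * norm \<epsilon> * D1) * x) * exp (2 * \<eta> * x)
    \<le> \<eta> * D2 * A"
proof -
  define q where "q = \<eta> * A * (1 + 2 * norm \<epsilon> * \<tau> + 2 * norm \<epsilon> * D1)"
  have q: "q \<ge> 0"
    using eta tau_pos A by (auto simp: q_def free_drift_const_def intro!: mult_nonneg_nonneg add_nonneg_nonneg)
  have "\<eta> * x \<le> 1 * \<tau>" using eta x by (intro mult_mono) auto
  then have "exp (2 * \<eta> * x) \<le> exp (2 * \<tau>)" by simp
  moreover have "\<eta> * D1 * A + q * x \<le> \<eta> * D1 * A + q * \<tau>" using q x by (simp add: mult_left_mono)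
  ultimately have "(\<eta> * D1 * A + q * x) * exp (2 * \<eta> * x) \<le> (\<eta> * D1 * A + q * \<tau>) * exp (2 * \<tau>)"
    using q x eta A by (intro mult_mono) (auto simp: free_drift_const_def)
  also have "\<dots> = \<eta> * D2 * A" by (simp add: ctrl_drift_const_def q_def algebra_simps)
  finally show ?thesis by (simp add: q_def)
qed

context
  fixes u :: "real \<Rightarrow> complex" and S :: "real set" and k :: nat and s0 t1 :: real
  assumes sol: "is_complex_ctrl_solution F \<epsilon> \<tau> u S"
    and S_downward: "\<And>t. t \<in> S \<Longrightarrow> {0..t} \<subseteq> S"
    and s0: "s0 = 3 * real k * \<tau>" and t1: "t1 \<in> S" "s0 \<le> t1" "t1 \<le> s0 + 3 * \<tau>"
    and small: "norm (u s0) \<le> r / (2 * Cb)"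
begin

lemma period_subset: "{s0..t1} \<subseteq> S"
proof -
  have "0 \<le> s0" using s0 tau_pos by simp
  then show ?thesis using S_downward[OF t1(1)] by auto
qed

lemma gain_active_in_period: "t \<in> {s0..<s0 + 3 * \<tau>} \<Longrightarrow> gain_active \<tau> t \<longleftrightarrow> s0 + 2 * \<tau> \<le> t"
  using gain_active_iff[OF tau_pos, of k t] s0 by auto

lemma continuous_on_flow_deviation: "continuous_on {s0..t1} (flow_deviation \<alpha> u s0)"
  using sol period_subset unfolding flow_deviation_def is_complex_ctrl_solution_def
  by (intro continuous_intros) (auto elim: continuous_on_subset)

lemma has_vector_derivative_flow_deviation:
  assumes t: "t \<in> {s0..<t1}" and e: "t \<le> e" "e \<le> t1"
  shows "(flow_deviation \<alpha> u s0 has_vector_derivative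
      exp ((s0 - t) *\<^sub>R \<alpha>) * (F (u t) - \<alpha> * u t) + (if gain_active \<tau> t then \<epsilon> else 0) *
        (exp ((s0 - t) *\<^sub>R \<alpha>) * u (t - 2 * \<tau>) - exp ((s0 - t) *\<^sub>R \<alpha>) * u (t - \<tau>)))
    (at t within {t..e})"
proof -
  have "t \<in> S" "{t..e} \<subseteq> S \<inter> {t..}" using assms period_subset by auto
  then have "(u has_vector_derivative
      F (u t) + (if gain_active \<tau> t then \<epsilon> else 0) * (u (t - 2 * \<tau>) - u (t - \<tau>))) (at t within {t..e})"
    using sol has_vector_derivative_within_subset unfolding is_complex_ctrl_solution_def by blast
  from has_vector_derivative_diff[OF has_vector_derivative_mult[OF
        has_vector_derivative_exp_scaleR_diff[of s0 \<alpha> t] this] has_vector_derivative_const[of "u s0"]]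
  show ?thesis unfolding flow_deviation_def[abs_def] by (simp add: algebra_simps)
qed

lemma norm_le_of_modulated:
  assumes t: "t \<in> {s0..s0 + 3 * \<tau>}"
    and le: "norm (exp ((s0 - t) *\<^sub>R \<alpha>) * u t) \<le> (1 + 2 * norm \<epsilon> * \<tau> + D2) * norm (u s0) + c"
  shows "norm (u t) \<le> Cb * norm (u s0) + exp (3 * \<tau> * Re \<alpha>) * c"
proof -
  have "norm (u t) \<le> exp (3 * \<tau> * Re \<alpha>) * norm (exp ((s0 - t) *\<^sub>R \<alpha>) * u t)"
    using norm_le_modulated[of "t - s0" "u t"] t by simp
  also have "\<dots> \<le> exp (3 * \<tau> * Re \<alpha>) * ((1 + 2 * norm \<epsilon> * \<tau> + D2) * norm (u s0) + c)"
    using le by simp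
  finally show ?thesis by (simp add: period_growth_const_def algebra_simps)
qed

lemma norm_le_radius_of_modulated:
  assumes "t \<in> {s0..s0 + 3 * \<tau>}"
    and "norm (exp ((s0 - t) *\<^sub>R \<alpha>) * u t) \<le> (1 + 2 * norm \<epsilon> * \<tau> + D2) * norm (u s0) + \<sigma>"
  shows "norm (u t) \<le> r"
proof -
  have "Cb * norm (u s0) \<le> r / 2"
    using small period_growth_const_pos[OF tau_pos] by (simp add: field_simps)
  then show ?thesis using norm_le_of_modulated[OF assms] by simp
qed

lemma free_segment_drift:
  assumes t: "t \<in> {s0..min t1 (s0 + 2 * \<tau>)}"
  shows "norm (flow_deviation \<alpha> u s0 t) \<le> \<eta> * D1 * norm (u s0)"
proof -
  define e1 where "e1 = min t1 (s0 + 2 * \<tau>)"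
  define g' where "g' t = exp ((s0 - t) *\<^sub>R \<alpha>) * (F (u t) - \<alpha> * u t)" for t
  have e1: "s0 \<le> e1" "e1 \<le> t1" "e1 \<le> s0 + 2 * \<tau>" using t1 tau_pos by (auto simp: e1_def)
  have "continuous_on {s0..e1} (flow_deviation \<alpha> u s0)"
    by (rule continuous_on_subset[OF continuous_on_flow_deviation]) (use e1 in auto)
  moreover have "(flow_deviation \<alpha> u s0 has_vector_derivative g' t) (at t within {t..e1})"
    if t: "t \<in> {s0..<e1}" for t
    using has_vector_derivative_flow_deviation[of t e1] gain_active_in_period[of t] t e1 tau_pos
    by (simp add: g'_def)
  moreover have "norm (g' t) \<le> \<eta> * norm (flow_deviation \<alpha> u s0 t) + \<eta> * norm (u s0)"
    if t: "t \<in> {s0..<e1}" and boot: "norm (flow_deviation \<alpha> u s0 t) <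
      (0 + \<eta> * norm (u s0) * (t - s0)) * exp (2 * \<eta> * (t - s0)) + \<sigma>"
    for t
  proof -
    have "\<eta> * norm (u s0) * ((t - s0) * exp (2 * \<eta> * (t - s0))) \<le> 1 * norm (u s0) * D2"
      using free_drift_factor_le[of "t - s0"] free_drift_le_ctrl_drift[OF tau_pos, of \<epsilon>] t e1 eta
      by (intro mult_mono) auto
    then have "(0 + \<eta> * norm (u s0) * (t - s0)) * exp (2 * \<eta> * (t - s0)) \<le> D2 * norm (u s0)"
      by (simp add: mult_ac)
    moreover have "0 \<le> 2 * norm \<epsilon> * \<tau> * norm (u s0)" using tau_pos by simp
    ultimately have "norm (exp ((s0 - t) *\<^sub>R \<alpha>) * u t) \<le> (1 + 2 * norm \<epsilon> * \<tau> + D2) * norm (u s0) + \<sigma>"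
      using boot norm_modulated_le_flow_deviation[of s0 t \<alpha> u] unfolding distrib_right by linarith
    then have "norm (u t) \<le> r"
      using t e1 tau_pos by (intro norm_le_radius_of_modulated) auto
    then have "norm (g' t) \<le> \<eta> * norm (exp ((s0 - t) *\<^sub>R \<alpha>) * u t)"
      unfolding g'_def by (rule modulated_defect_le)
    also have "\<dots> \<le> \<eta> * (norm (flow_deviation \<alpha> u s0 t) + norm (u s0))"
      using norm_modulated_le_flow_deviation[of s0 t \<alpha> u] eta by (intro mult_left_mono) auto
    finally show ?thesis by (simp add: algebra_simps)
  qed
  ultimately have "norm (flow_deviation \<alpha> u s0 t) \<le> (0 + \<eta> * norm (u s0) * (t - s0)) * exp (2 * \<eta> * (t - s0))"
    using t tau_pos eta r_pos
    by (intro gronwall_bootstrap[of s0 e1 _ g' \<eta> "\<eta> * norm (u s0)" 0 \<sigma>])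
      (auto simp: e1_def)
  also have "\<dots> \<le> \<eta> * norm (u s0) * D1"
    using free_drift_factor_le[of "t - s0"] t eta by (auto intro: mult_left_mono)
  finally show ?thesis by (simp add: algebra_simps)
qed

lemma ctrl_defect_le:
  assumes t: "t \<in> {s0 + 2 * \<tau>..<t1}" and ut: "norm (u t) \<le> r"
  shows "norm (exp ((s0 - t) *\<^sub>R \<alpha>) * (F (u t) - \<alpha> * u t) +
      \<epsilon> * (exp ((- 2 * \<tau>) *\<^sub>R \<alpha>) * flow_deviation \<alpha> u s0 (t - 2 * \<tau>)
        - exp ((- \<tau>) *\<^sub>R \<alpha>) * flow_deviation \<alpha> u s0 (t - \<tau>)))
    \<le> \<eta> * norm (exp ((s0 - t) *\<^sub>R \<alpha>) * u t) + norm \<epsilon> * (2 * (\<eta> * D1 * norm (u s0)))"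
proof -
  have delayed_le: "norm (exp ((- c) *\<^sub>R \<alpha>) * flow_deviation \<alpha> u s0 (t - c)) \<le> \<eta> * D1 * norm (u s0)"
    if "c = \<tau> \<or> c = 2 * \<tau>" for c
  proof -
    have "norm (exp ((- c) *\<^sub>R \<alpha>)) \<le> 1" using norm_exp_neg_le_1[of c] that tau_pos by auto
    moreover have "norm (flow_deviation \<alpha> u s0 (t - c)) \<le> \<eta> * D1 * norm (u s0)"
      using that t t1 tau_pos by (intro free_segment_drift) auto
    ultimately have "norm (exp ((- c) *\<^sub>R \<alpha>)) * norm (flow_deviation \<alpha> u s0 (t - c))
        \<le> 1 * (\<eta> * D1 * norm (u s0))"
      by (intro mult_mono) auto
    then show ?thesis by (simp add: norm_mult)
  qed
  let ?y = "exp ((- 2 * \<tau>) *\<^sub>R \<alpha>) * flow_deviation \<alpha> u s0 (t - 2 * \<tau>)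
    - exp ((- \<tau>) *\<^sub>R \<alpha>) * flow_deviation \<alpha> u s0 (t - \<tau>)"
  have "norm ?y \<le> 2 * (\<eta> * D1 * norm (u s0))"
    using norm_triangle_ineq4[of "exp ((- 2 * \<tau>) *\<^sub>R \<alpha>) * flow_deviation \<alpha> u s0 (t - 2 * \<tau>)"
        "exp ((- \<tau>) *\<^sub>R \<alpha>) * flow_deviation \<alpha> u s0 (t - \<tau>)"]
      delayed_le[of "2 * \<tau>"] delayed_le[of \<tau>]
    by simp
  then have "norm (\<epsilon> * ?y) \<le> norm \<epsilon> * (2 * (\<eta> * D1 * norm (u s0)))"
    by (simp add: norm_mult mult_left_mono)
  moreover have "norm (exp ((s0 - t) *\<^sub>R \<alpha>) * (F (u t) - \<alpha> * u t))
      \<le> \<eta> * norm (exp ((s0 - t) *\<^sub>R \<alpha>) * u t)"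
    by (rule modulated_defect_le[OF ut])
  ultimately show ?thesis
    using norm_triangle_ineq[of "exp ((s0 - t) *\<^sub>R \<alpha>) * (F (u t) - \<alpha> * u t)" "\<epsilon> * ?y"] by linarith
qed

lemma ctrl_segment_drift:
  assumes b2: "s0 + 2 * \<tau> \<le> t1" and t: "t \<in> {s0 + 2 * \<tau>..t1}"
  shows "norm (flow_deviation \<alpha> u s0 t - (t - s0 - 2 * \<tau>) *\<^sub>R (\<epsilon> * \<Delta> * u s0)) \<le> \<eta> * D2 * norm (u s0)"
proof -
  define b where "b = s0 + 2 * \<tau>"
  define w where "w = \<epsilon> * \<Delta> * u s0"
  define h where "h t = flow_deviation \<alpha> u s0 t - (t - b) *\<^sub>R w" for t
  define h' where "h' t = exp ((s0 - t) *\<^sub>R \<alpha>) * (F (u t) - \<alpha> * u t) +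
      \<epsilon> * (exp ((- 2 * \<tau>) *\<^sub>R \<alpha>) * flow_deviation \<alpha> u s0 (t - 2 * \<tau>)
        - exp ((- \<tau>) *\<^sub>R \<alpha>) * flow_deviation \<alpha> u s0 (t - \<tau>))" for t
  define q where "q = \<eta> * norm (u s0) * (1 + 2 * norm \<epsilon> * \<tau> + 2 * norm \<epsilon> * D1)"
  have q: "q \<ge> 0"
    using eta tau_pos by (auto simp: q_def free_drift_const_def intro!: mult_nonneg_nonneg add_nonneg_nonneg)
  have modulated_le: "norm (exp ((s0 - t) *\<^sub>R \<alpha>) * u t) \<le> norm (h t) + (1 + 2 * norm \<epsilon> * \<tau>) * norm (u s0)"
    if "t \<in> {b..b + \<tau>}" for t
  proof -
    have "exp ((s0 - t) *\<^sub>R \<alpha>) * u t = h t + u s0 + (t - b) *\<^sub>R w"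
      by (simp add: h_def flow_deviation_def)
    then have "norm (exp ((s0 - t) *\<^sub>R \<alpha>) * u t) \<le> norm (h t) + norm (u s0) + norm ((t - b) *\<^sub>R w)"
      by (metis norm_triangle_le norm_triangle_ineq add_right_mono)
    then show ?thesis
      using norm_ctrl_drift_term_le[of "t - b" "u s0"] that by (simp add: w_def algebra_simps)
  qed
  have bound_le: "(\<eta> * D1 * norm (u s0) + q * (t - b)) * exp (2 * \<eta> * (t - b)) \<le> \<eta> * D2 * norm (u s0)"
    if "t \<in> {b..b + \<tau>}" for t
    using ctrl_gronwall_bound_le[of "t - b" "norm (u s0)"] that by (simp add: q_def)
  have "continuous_on {b..t1} h"
    unfolding h_def using tau_pos
    by (intro continuous_intros continuous_on_subset[OF continuous_on_flow_deviation]) (auto simp: b_def)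
  moreover have "(h has_vector_derivative h' t) (at t within {t..t1})" if t: "t \<in> {b..<t1}" for t
  proof -
    have "gain_active \<tau> t" using t t1 gain_active_in_period[of t] tau_pos by (auto simp: b_def)
    then have "(flow_deviation \<alpha> u s0 has_vector_derivative exp ((s0 - t) *\<^sub>R \<alpha>) * (F (u t) - \<alpha> * u t) +
        \<epsilon> * (exp ((s0 - t) *\<^sub>R \<alpha>) * u (t - 2 * \<tau>) - exp ((s0 - t) *\<^sub>R \<alpha>) * u (t - \<tau>)))
        (at t within {t..t1})"
      using has_vector_derivative_flow_deviation[of t t1] t tau_pos by (simp add: b_def)
    from has_vector_derivative_diff[OF this has_vector_derivative_scaleR[OF
          DERIV_diff[OF DERIV_ident DERIV_const] has_vector_derivative_const[of w]]]
    show ?thesis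
      unfolding h_def[abs_def] h'_def modulated_delay_eq[of s0 t] w_def by (simp add: algebra_simps)
  qed
  moreover have "norm (h' t) \<le> \<eta> * norm (h t) + q"
    if t: "t \<in> {b..<t1}"
      and boot: "norm (h t) < (\<eta> * D1 * norm (u s0) + q * (t - b)) * exp (2 * \<eta> * (t - b)) + \<sigma>"
    for t
  proof -
    have t': "t \<in> {b..b + \<tau>}" using t t1 s0 by (auto simp: b_def)
    have "\<eta> * D2 * norm (u s0) \<le> D2 * norm (u s0)"
      using eta ctrl_drift_const_pos[OF tau_pos, of \<epsilon>] by (simp add: mult_right_mono)
    then have "norm (exp ((s0 - t) *\<^sub>R \<alpha>) * u t) \<le> (1 + 2 * norm \<epsilon> * \<tau> + D2) * norm (u s0) + \<sigma>"
      using modulated_le[OF t'] boot bound_le[OF t'] by (simp add: algebra_simps)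
    then have "norm (u t) \<le> r"
      using t' tau_pos by (intro norm_le_radius_of_modulated) (auto simp: b_def)
    from ctrl_defect_le[OF _ this]
    have "norm (h' t) \<le> \<eta> * norm (exp ((s0 - t) *\<^sub>R \<alpha>) * u t) + norm \<epsilon> * (2 * (\<eta> * D1 * norm (u s0)))"
      using t by (simp add: h'_def b_def)
    also have "\<dots> \<le> \<eta> * (norm (h t) + (1 + 2 * norm \<epsilon> * \<tau>) * norm (u s0)) + norm \<epsilon> * (2 * (\<eta> * D1 * norm (u s0)))"
      using modulated_le[OF t'] eta by simp
    also have "\<dots> = \<eta> * norm (h t) + q" by (simp add: q_def algebra_simps)
    finally show ?thesis .
  qed
  moreover have "norm (h b) \<le> \<eta> * D1 * norm (u s0)"
    using free_segment_drift[of b] b2 tau_pos by (simp add: h_def b_def)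
  ultimately have "norm (h t) \<le> (\<eta> * D1 * norm (u s0) + q * (t - b)) * exp (2 * \<eta> * (t - b))"
    using t tau_pos eta r_pos q
    by (intro gronwall_bootstrap[of b t1 h h' \<eta> q "\<eta> * D1 * norm (u s0)" \<sigma>]) (auto simp: b_def)
  also have "\<dots> \<le> \<eta> * D2 * norm (u s0)" using t t1 by (intro bound_le) (auto simp: b_def)
  finally show ?thesis by (simp add: h_def w_def b_def diff_diff_eq)
qed

lemma period_growth:
  assumes t: "t \<in> {s0..t1}"
  shows "norm (u t) \<le> Cb * norm (u s0)"
proof -
  have "\<eta> * D1 \<le> 1 * D1" "\<eta> * D2 \<le> 1 * D2"
    using eta tau_pos ctrl_drift_const_pos[OF tau_pos, of \<epsilon>]
    by (intro mult_right_mono; simp add: free_drift_const_def)+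
  then have D: "\<eta> * D1 \<le> D2" "\<eta> * D2 \<le> D2"
    using free_drift_le_ctrl_drift[OF tau_pos, of \<epsilon>] by simp_all
  have "norm (exp ((s0 - t) *\<^sub>R \<alpha>) * u t) \<le> (1 + 2 * norm \<epsilon> * \<tau> + D2) * norm (u s0) + 0"
  proof (cases "t \<le> s0 + 2 * \<tau>")
    case True
    then have "norm (flow_deviation \<alpha> u s0 t) \<le> \<eta> * D1 * norm (u s0)"
      using t by (intro free_segment_drift) auto
    moreover have "0 \<le> 2 * norm \<epsilon> * \<tau> * norm (u s0)" using tau_pos by simp
    ultimately show ?thesis
      using norm_modulated_le_flow_deviation[of s0 t \<alpha> u] mult_right_mono[OF D(1) norm_ge_zero, of "u s0"]
      unfolding distrib_right by linarith
  next
    case False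
    let ?w = "(t - s0 - 2 * \<tau>) *\<^sub>R (\<epsilon> * \<Delta> * u s0)"
    have "norm (flow_deviation \<alpha> u s0 t - ?w) \<le> \<eta> * D2 * norm (u s0)"
      using t False by (intro ctrl_segment_drift) auto
    moreover have "norm ?w \<le> 2 * norm \<epsilon> * \<tau> * norm (u s0)"
      using False t t1 by (intro norm_ctrl_drift_term_le) auto
    ultimately show ?thesis
      using mult_right_mono[OF D(2) norm_ge_zero, of "u s0"] norm_modulated_le_flow_deviation[of s0 t \<alpha> u]
        norm_triangle_sub[of "flow_deviation \<alpha> u s0 t" ?w]
      unfolding distrib_right by linarith
  qed
  then show ?thesis using norm_le_of_modulated[of t 0] t t1 by simp
qed

lemma period_monodromy:
  assumes t1_end: "t1 = s0 + 3 * \<tau>"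
  shows "norm (u t1 - monodromy \<tau> \<alpha> \<epsilon> * u s0) \<le> exp (3 * \<tau> * Re \<alpha>) * \<eta> * D2 * norm (u s0)"
proof -
  define h where "h = flow_deviation \<alpha> u s0 t1 - \<tau> *\<^sub>R (\<epsilon> * \<Delta> * u s0)"
  have "norm h \<le> \<eta> * D2 * norm (u s0)"
    using ctrl_segment_drift[of t1] t1_end tau_pos by (simp add: h_def)
  have e: "exp ((3 * \<tau>) *\<^sub>R \<alpha>) * exp ((s0 - t1) *\<^sub>R \<alpha>) = 1"
    "exp ((3 * \<tau>) *\<^sub>R \<alpha>) * exp ((- 2 * \<tau>) *\<^sub>R \<alpha>) = exp (\<tau> *\<^sub>R \<alpha>)"
    "exp ((3 * \<tau>) *\<^sub>R \<alpha>) * exp ((- \<tau>) *\<^sub>R \<alpha>) = exp ((2 * \<tau>) *\<^sub>R \<alpha>)"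
    unfolding exp_scaleR_mult t1_end by simp_all
  have "exp ((3 * \<tau>) *\<^sub>R \<alpha>) * h = exp ((3 * \<tau>) *\<^sub>R \<alpha>) * exp ((s0 - t1) *\<^sub>R \<alpha>) * u t1
      - exp ((3 * \<tau>) *\<^sub>R \<alpha>) * u s0 - \<epsilon> * \<tau> * (exp ((3 * \<tau>) *\<^sub>R \<alpha>) * exp ((- 2 * \<tau>) *\<^sub>R \<alpha>)
      - exp ((3 * \<tau>) *\<^sub>R \<alpha>) * exp ((- \<tau>) *\<^sub>R \<alpha>)) * u s0"
    unfolding h_def flow_deviation_def scaleR_conv_of_real by (simp add: algebra_simps)
  also have "\<dots> = u t1 - monodromy \<tau> \<alpha> \<epsilon> * u s0"
    unfolding e monodromy_def by (simp add: algebra_simps)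
  finally have "norm (u t1 - monodromy \<tau> \<alpha> \<epsilon> * u s0) = norm (exp ((3 * \<tau>) *\<^sub>R \<alpha>) * h)"
    by simp
  also have "\<dots> = exp (3 * \<tau> * Re \<alpha>) * norm h" by (simp add: norm_mult)
  also have "\<dots> \<le> exp (3 * \<tau> * Re \<alpha>) * (\<eta> * D2 * norm (u s0))"
    using \<open>norm h \<le> _\<close> by simp
  finally show ?thesis by (simp add: mult.assoc)
qed

end

abbreviation "contraction \<equiv> norm (monodromy \<tau> \<alpha> \<epsilon>) + exp (3 * \<tau> * Re \<alpha>) * \<eta> * D2"

lemma contraction_nonneg: "0 \<le> contraction"
  using eta ctrl_drift_const_pos[OF tau_pos, of \<epsilon>] by simp

lemma solution_decay:
  assumes sol: "is_complex_ctrl_solution F \<epsilon> \<tau> u S"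
    and S_downward: "\<And>t. t \<in> S \<Longrightarrow> {0..t} \<subseteq> S" and S_nonneg: "\<And>t. t \<in> S \<Longrightarrow> 0 \<le> t"
    and contracting: "contraction < 1" and small: "norm (u 0) \<le> r / (2 * Cb)"
    and t: "t \<in> S"
  shows "norm (u t) \<le> Cb * contraction ^ period_index \<tau> t * norm (u 0)"
proof -
  have shrink: "contraction ^ k * norm (u 0) \<le> r / (2 * Cb)" for k
  proof -
    have "contraction ^ k \<le> 1" using contraction_nonneg contracting by (simp add: power_le_one)
    then have "contraction ^ k * norm (u 0) \<le> norm (u 0)"
      using contraction_nonneg by (simp add: mult_left_le_one_le)
    then show ?thesis using small by linarith
  qed
  have step: "norm (u (3 * real k * \<tau>)) \<le> contraction ^ k * norm (u 0)" if "3 * real k * \<tau> \<in> S" for k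
    using that
  proof (induction k)
    case (Suc k)
    have "3 * real k * \<tau> \<in> {0..3 * real (Suc k) * \<tau>}" using tau_pos by auto
    then have k: "3 * real k * \<tau> \<in> S" using S_downward[OF Suc.prems] by auto
    then have "norm (u (3 * real k * \<tau>)) \<le> r / (2 * Cb)" using Suc.IH shrink order_trans by blast
    then have "norm (u (3 * real (Suc k) * \<tau>) - monodromy \<tau> \<alpha> \<epsilon> * u (3 * real k * \<tau>))
        \<le> exp (3 * \<tau> * Re \<alpha>) * \<eta> * D2 * norm (u (3 * real k * \<tau>))"
      using Suc.prems tau_pos
      by (intro period_monodromy[OF sol S_downward refl]) (auto simp: algebra_simps)
    then have "norm (u (3 * real (Suc k) * \<tau>)) \<le> contraction * norm (u (3 * real k * \<tau>))"
      using norm_triangle_ineq2[of "u (3 * real (Suc k) * \<tau>)" "monodromy \<tau> \<alpha> \<epsilon> * u (3 * real k * \<tau>)"]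
      by (simp add: norm_mult algebra_simps)
    also have "\<dots> \<le> contraction * (contraction ^ k * norm (u 0))"
      using contraction_nonneg Suc.IH[OF k] by (intro mult_left_mono)
    finally show ?case by simp
  qed simp
  define k where "k = period_index \<tau> t"
  have k: "3 * real k * \<tau> \<le> t" "t < 3 * real k * \<tau> + 3 * \<tau>"
    using period_index_bounds[OF tau_pos S_nonneg[OF t]] by (simp_all add: k_def)
  then have kS: "3 * real k * \<tau> \<in> S" using S_downward[OF t] tau_pos by auto
  then have "norm (u (3 * real k * \<tau>)) \<le> r / (2 * Cb)" using step shrink order_trans by blast
  then have "norm (u t) \<le> Cb * norm (u (3 * real k * \<tau>))"
    using k t by (intro period_growth[OF sol S_downward refl]) auto
  also have "\<dots> \<le> Cb * (contraction ^ k * norm (u 0))"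
    using step[OF kS] period_growth_const_pos[OF tau_pos] by simp
  finally show ?thesis by (simp add: k_def mult.assoc)
qed

lemma solution_bounded:
  assumes "is_complex_ctrl_solution F \<epsilon> \<tau> u S"
    and "\<And>t. t \<in> S \<Longrightarrow> {0..t} \<subseteq> S" "\<And>t. t \<in> S \<Longrightarrow> 0 \<le> t"
    and contracting: "contraction < 1" and "norm (u 0) \<le> r / (2 * Cb)" and "t \<in> S"
  shows "norm (u t) \<le> Cb * norm (u 0)"
proof -
  have "Cb * contraction ^ period_index \<tau> t * norm (u 0) \<le> Cb * 1 * norm (u 0)"
    using contraction_nonneg contracting less_imp_le[OF period_growth_const_pos[OF tau_pos, of \<alpha> \<epsilon>]]
    by (intro mult_right_mono mult_left_mono power_le_one) auto
  then show ?thesis using solution_decay[OF assms] by simp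
qed

lemma solution_tendsto_zero:
  assumes sol: "is_complex_ctrl_solution F \<epsilon> \<tau> u {0..}"
    and contracting: "contraction < 1" and small: "norm (u 0) \<le> r / (2 * Cb)"
  shows "(u \<longlongrightarrow> 0) at_top"
proof (rule tendsto_0_le)
  show "((\<lambda>t. contraction ^ period_index \<tau> t) \<longlongrightarrow> 0) at_top"
    using filterlim_compose[OF LIMSEQ_power_zero[of contraction] filterlim_period_index[OF tau_pos]]
      contraction_nonneg contracting
    by simp
  show "\<forall>\<^sub>F t in at_top. norm (u t) \<le> norm (contraction ^ period_index \<tau> t) * (Cb * norm (u 0))"
    using eventually_ge_at_top[of 0]
  proof eventually_elim
    case (elim t)
    then show ?case
      using solution_decay[OF sol _ _ contracting small, of t] contraction_nonneg
      by (simp add: algebra_simps)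
  qed
qed

end

section \<open>Existence of solutions\<close>

definition is_period_solution :: "(complex \<Rightarrow> complex) \<Rightarrow> complex \<Rightarrow> real \<Rightarrow> (real \<Rightarrow> complex) \<Rightarrow> bool" where
  "is_period_solution F \<epsilon> \<tau> w \<longleftrightarrow> continuous_on {0..3 * \<tau>} w \<and>
     (\<forall>t\<in>{0..<3 * \<tau>}. (w has_vector_derivative
         F (w t) + (if gain_active \<tau> t then \<epsilon> else 0) * (w (t - 2 * \<tau>) - w (t - \<tau>)))
       (at t within {t..3 * \<tau>}))"

lemma period_solution_exists:
  fixes F :: "complex \<Rightarrow> complex"
  assumes lip: "L-lipschitz_on UNIV F" and \<tau>: "\<tau> > 0"
  shows "\<exists>w. is_period_solution F \<epsilon> \<tau> w \<and> w 0 = z"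
proof -
  obtain v1 where v1: "continuous_on {0..2 * \<tau>} v1" "v1 0 = z"
    "\<And>t. t \<in> {0..2 * \<tau>} \<Longrightarrow> (v1 has_vector_derivative F (v1 t)) (at t within {0..2 * \<tau>})"
    using picard_existence[OF lip, where h="\<lambda>t. 0" and a=0 and b="2 * \<tau>" and init=z] \<tau> by auto
  define h where "h t = \<epsilon> * (v1 (t - 2 * \<tau>) - v1 (t - \<tau>))" for t
  have "continuous_on {2 * \<tau>..3 * \<tau>} h"
    unfolding h_def using \<tau>
    by (intro continuous_intros continuous_on_compose2[OF v1(1)]; force)
  then obtain v2 where v2: "continuous_on {2 * \<tau>..3 * \<tau>} v2" "v2 (2 * \<tau>) = v1 (2 * \<tau>)"
    "\<And>t. t \<in> {2 * \<tau>..3 * \<tau>} \<Longrightarrow> (v2 has_vector_derivative F (v2 t) + h t) (at t within {2 * \<tau>..3 * \<tau>})"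
    using picard_existence[OF lip, where h=h and a="2 * \<tau>" and b="3 * \<tau>" and init="v1 (2 * \<tau>)"] \<tau> by auto
  define w where "w t = (if t \<le> 2 * \<tau> then v1 t else v2 t)" for t
  have w1: "w t = v1 t" if "t \<le> 2 * \<tau>" for t using that by (simp add: w_def)
  have w2: "w t = v2 t" if "2 * \<tau> \<le> t" for t using that v2(2) by (auto simp: w_def)
  have "continuous_on {0..2 * \<tau>} w"
    using v1(1) by (rule continuous_on_cong[THEN iffD1, rotated -1]) (auto simp: w1)
  moreover have "continuous_on {2 * \<tau>..3 * \<tau>} w"
    using v2(1) by (rule continuous_on_cong[THEN iffD1, rotated -1]) (auto simp: w2)
  ultimately have "continuous_on ({0..2 * \<tau>} \<union> {2 * \<tau>..3 * \<tau>}) w"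
    by (intro continuous_on_closed_Un) auto
  moreover have "{0..2 * \<tau>} \<union> {2 * \<tau>..3 * \<tau>} = {0..3 * \<tau>}" using \<tau> by auto
  moreover have "(w has_vector_derivative
      F (w t) + (if gain_active \<tau> t then \<epsilon> else 0) * (w (t - 2 * \<tau>) - w (t - \<tau>)))
      (at t within {t..3 * \<tau>})" if t: "t \<in> {0..<3 * \<tau>}" for t
  proof (cases "t < 2 * \<tau>")
    case True
    have "\<not> gain_active \<tau> t" using gain_active_iff[OF \<tau>, of 0 t] t True by auto
    have "(v1 has_vector_derivative F (v1 t)) (at t within {t..2 * \<tau>})"
      by (rule has_vector_derivative_within_subset[OF v1(3)]) (use t True in auto)
    then have "(w has_vector_derivative F (v1 t)) (at t within {t..2 * \<tau>})"
      by (rule has_vector_derivative_transform[rotated 2]) (use True in \<open>auto simp: w1\<close>)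
    then have "(w has_vector_derivative F (w t)) (at t within {t..2 * \<tau>})"
      using True by (simp add: w1)
    then show ?thesis
      using \<open>\<not> gain_active \<tau> t\<close> at_within_Icc_right[OF True] at_within_Icc_right[of t "3 * \<tau>"] t
      by simp
  next
    case False
    have "gain_active \<tau> t" using gain_active_iff[OF \<tau>, of 0 t] t False by auto
    have "(v2 has_vector_derivative F (v2 t) + h t) (at t within {t..3 * \<tau>})"
      by (rule has_vector_derivative_within_subset[OF v2(3)]) (use t False in auto)
    then have "(w has_vector_derivative F (v2 t) + h t) (at t within {t..3 * \<tau>})"
      by (rule has_vector_derivative_transform[rotated 2]) (use False t in \<open>auto simp: w2\<close>)
    moreover have "F (v2 t) + h t = F (w t) + \<epsilon> * (w (t - 2 * \<tau>) - w (t - \<tau>))"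
      using False t \<tau> by (simp add: h_def w1 w2)
    ultimately show ?thesis using \<open>gain_active \<tau> t\<close> by simp
  qed
  ultimately have "is_period_solution F \<epsilon> \<tau> w" by (simp add: is_period_solution_def)
  moreover have "w 0 = z" using v1(2) \<tau> by (simp add: w1)
  ultimately show ?thesis by blast
qed


definition glue_periods :: "real \<Rightarrow> (nat \<Rightarrow> real \<Rightarrow> 'a) \<Rightarrow> real \<Rightarrow> 'a" where
  "glue_periods \<tau> W t = W (period_index \<tau> t) (t - 3 * real (period_index \<tau> t) * \<tau>)"

context
  fixes F :: "complex \<Rightarrow> complex" and \<epsilon> :: complex and \<tau> :: real and W :: "nat \<Rightarrow> real \<Rightarrow> complex"
  assumes \<tau>: "\<tau> > 0" and W: "\<And>k. is_period_solution F \<epsilon> \<tau> (W k)"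
    and match: "\<And>k. W (Suc k) 0 = W k (3 * \<tau>)"
begin

lemma glue_periods_eq:
  assumes t: "3 * real k * \<tau> \<le> t" "t \<le> 3 * real k * \<tau> + 3 * \<tau>"
  shows "glue_periods \<tau> W t = W k (t - 3 * real k * \<tau>)"
proof (cases "t < 3 * real k * \<tau> + 3 * \<tau>")
  case True
  then show ?thesis using t \<tau> by (simp add: glue_periods_def period_index_eqI)
next
  case False
  then have t_eq: "t = 3 * real (Suc k) * \<tau>" using t by (simp add: algebra_simps)
  then have "period_index \<tau> t = Suc k" using \<tau> by (intro period_index_eqI) auto
  then show ?thesis using match[of k] by (simp add: glue_periods_def t_eq algebra_simps)
qed

lemma continuous_on_glue_periods: "continuous_on {0..} (glue_periods \<tau> W)"
proof -
  have period: "continuous_on {3 * real k * \<tau>..3 * real k * \<tau> + 3 * \<tau>} (glue_periods \<tau> W)" for k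
  proof -
    have "continuous_on {0..3 * \<tau>} (W k)" using W[of k] by (simp add: is_period_solution_def)
    then have "continuous_on {3 * real k * \<tau>..3 * real k * \<tau> + 3 * \<tau>} (\<lambda>t. W k (t - 3 * real k * \<tau>))"
      by (rule continuous_on_compose2) (auto intro!: continuous_intros)
    then show ?thesis by (rule continuous_on_cong[THEN iffD1, rotated -1]) (auto simp: glue_periods_eq)
  qed
  have upto: "continuous_on {0..3 * real n * \<tau>} (glue_periods \<tau> W)" for n
  proof (induction n)
    case (Suc n)
    have "0 \<le> 3 * real n * \<tau>" using \<tau> by simp
    then have "{0..3 * real n * \<tau>} \<union> {3 * real n * \<tau>..3 * real n * \<tau> + 3 * \<tau>} = {0..3 * real (Suc n) * \<tau>}"
      using \<tau> by (subst ivl_disj_un_two_touch(4)) (auto simp: algebra_simps)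
    then show ?case using continuous_on_closed_Un[OF _ _ Suc period[of n]] by simp
  qed simp
  have "continuous (at t within {0..}) (glue_periods \<tau> W)" if t: "t \<in> {0..}" for t
  proof -
    define n where "n = Suc (period_index \<tau> t)"
    have "t < 3 * real n * \<tau>"
      using period_index_bounds(2)[OF \<tau>, of t] t by (simp add: n_def algebra_simps)
    then have "at t within {0..3 * real n * \<tau>} = at t within {0..}"
      by (intro at_within_nhd[of t "{..<3 * real n * \<tau>}"]) auto
    moreover have "t \<in> {0..3 * real n * \<tau>}" using t \<open>t < 3 * real n * \<tau>\<close> by auto
    ultimately show ?thesis
      using upto[of n] unfolding continuous_on_eq_continuous_within by metis
  qed
  then show ?thesis by (simp add: continuous_on_eq_continuous_within)
qed

lemma has_vector_derivative_glue_periods: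
  assumes t: "t \<ge> 0"
  defines "u \<equiv> glue_periods \<tau> W"
  shows "(u has_vector_derivative
      F (u t) + (if gain_active \<tau> t then \<epsilon> else 0) * (u (t - 2 * \<tau>) - u (t - \<tau>)))
    (at t within {0..} \<inter> {t..})"
proof -
  define k where "k = period_index \<tau> t"
  define s where "s = t - 3 * real k * \<tau>"
  have k: "3 * real k * \<tau> \<le> t" "t < 3 * real k * \<tau> + 3 * \<tau>"
    using period_index_bounds[OF \<tau> t] by (simp_all add: k_def)
  then have s: "s \<in> {0..<3 * \<tau>}" by (simp add: s_def)
  have gain: "gain_active \<tau> t \<longleftrightarrow> gain_active \<tau> s"
    using gain_active_iff[OF \<tau> k] gain_active_iff[OF \<tau>, of 0 s] s by (simp add: s_def algebra_simps)
  have "(W k has_vector_derivative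
      F (W k s) + (if gain_active \<tau> s then \<epsilon> else 0) * (W k (s - 2 * \<tau>) - W k (s - \<tau>)))
      (at (t - 3 * real k * \<tau>) within {t - 3 * real k * \<tau>..3 * real k * \<tau> + 3 * \<tau> - 3 * real k * \<tau>})"
    using W[of k] s unfolding is_period_solution_def s_def by simp
  from has_vector_derivative_shift[OF this]
  have "(u has_vector_derivative
      F (W k s) + (if gain_active \<tau> s then \<epsilon> else 0) * (W k (s - 2 * \<tau>) - W k (s - \<tau>)))
      (at t within {t..3 * real k * \<tau> + 3 * \<tau>})"
    by (rule has_vector_derivative_transform[rotated 2]) (use k in \<open>auto simp: u_def glue_periods_eq\<close>)
  moreover have "at t within {t..3 * real k * \<tau> + 3 * \<tau>} = at t within {0..} \<inter> {t..}"
    using at_within_Icc_right[OF k(2)] t by (simp add: Int_absorb1 subset_eq)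
  moreover have "u t = W k s" using k by (simp add: u_def glue_periods_eq s_def)
  moreover have "u (t - c) = W k (s - c)" if "gain_active \<tau> s" "c = \<tau> \<or> c = 2 * \<tau>" for c
    using that gain_active_iff[OF \<tau>, of 0 s] s k \<tau>
    by (subst u_def, subst glue_periods_eq[of k]) (auto simp: s_def algebra_simps)
  ultimately show ?thesis using gain by auto
qed

lemma is_complex_ctrl_solution_glue_periods:
  "is_complex_ctrl_solution F \<epsilon> \<tau> (glue_periods \<tau> W) {0..}"
  using continuous_on_glue_periods has_vector_derivative_glue_periods
  by (simp add: is_complex_ctrl_solution_def)

end

lemma complex_ctrl_solution_exists:
  fixes F :: "complex \<Rightarrow> complex"
  assumes lip: "L-lipschitz_on UNIV F" and \<tau>: "\<tau> > 0"
  shows "\<exists>u. is_complex_ctrl_solution F \<epsilon> \<tau> u {0..} \<and> u 0 = z"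
proof -
  define P where "P z w \<longleftrightarrow> is_period_solution F \<epsilon> \<tau> w \<and> w 0 = z" for z w
  define next_period where "next_period z = (SOME w. P z w)" for z
  have next_period: "P z (next_period z)" for z
  proof -
    have "\<exists>w. P z w" unfolding P_def by (rule period_solution_exists[OF lip \<tau>])
    then show ?thesis unfolding next_period_def by (rule someI_ex)
  qed
  define W where "W k = next_period (((\<lambda>z. next_period z (3 * \<tau>)) ^^ k) z)" for k
  have "is_complex_ctrl_solution F \<epsilon> \<tau> (glue_periods \<tau> W) {0..}"
    by (rule is_complex_ctrl_solution_glue_periods[where W=W, OF \<tau>])
      (use next_period in \<open>simp_all add: W_def P_def\<close>)
  moreover have "glue_periods \<tau> W 0 = z"
    using next_period[of z] period_index_eqI[OF \<tau>, of 0 0] \<tau> by (simp add: glue_periods_def W_def P_def)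
  ultimately show ?thesis by blast
qed

section \<open>Local asymptotic stability of the scalar equation\<close>

lemma is_complex_ctrl_solution_cong:
  "(\<And>t. t \<in> S \<Longrightarrow> F (u t) = F' (u t)) \<Longrightarrow>
    is_complex_ctrl_solution F \<epsilon> \<tau> u S \<longleftrightarrow> is_complex_ctrl_solution F' \<epsilon> \<tau> u S"
  unfolding is_complex_ctrl_solution_def by simp

lemma contracting_size_exists:
  assumes \<tau>: "\<tau> > 0" and monodromy: "norm (monodromy \<tau> \<alpha> \<epsilon>) < 1"
  obtains \<eta> where "0 < \<eta>" "\<eta> \<le> 1"
    "norm (monodromy \<tau> \<alpha> \<epsilon>) + exp (3 * \<tau> * Re \<alpha>) * \<eta> * ctrl_drift_const \<tau> \<epsilon> < 1"
proof -
  define B where "B = exp (3 * \<tau> * Re \<alpha>) * ctrl_drift_const \<tau> \<epsilon>"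
  have B: "B > 0" using ctrl_drift_const_pos[OF \<tau>] by (simp add: B_def)
  define \<eta> where "\<eta> = min 1 ((1 - norm (monodromy \<tau> \<alpha> \<epsilon>)) / (2 * B))"
  have "B * \<eta> \<le> B * ((1 - norm (monodromy \<tau> \<alpha> \<epsilon>)) / (2 * B))"
    using B by (intro mult_left_mono) (auto simp: \<eta>_def)
  also have "\<dots> = 1 / 2 - norm (monodromy \<tau> \<alpha> \<epsilon>) / 2" using B by (simp add: field_simps)
  finally have "norm (monodromy \<tau> \<alpha> \<epsilon>) + B * \<eta> < 1" using monodromy by linarith
  moreover have "0 < \<eta>" "\<eta> \<le> 1" using monodromy B by (auto simp: \<eta>_def)
  ultimately show ?thesis using that by (simp add: B_def mult_ac)
qed

definition complex_ctrl_stable_at_0 :: "(complex \<Rightarrow> complex) \<Rightarrow> complex \<Rightarrow> real \<Rightarrow> bool" where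
  "complex_ctrl_stable_at_0 G \<epsilon> \<tau> \<longleftrightarrow> (\<exists>\<rho>>0. \<exists>C>0.
     (\<forall>z. norm z \<le> \<rho> \<longrightarrow> (\<exists>u. is_complex_ctrl_solution G \<epsilon> \<tau> u {0..} \<and> u 0 = z)) \<and>
     (\<forall>T u t. is_complex_ctrl_solution G \<epsilon> \<tau> u {0..<T} \<longrightarrow> norm (u 0) \<le> \<rho> \<longrightarrow> t \<in> {0..<T} \<longrightarrow>
        norm (u t) \<le> C * norm (u 0)) \<and>
     (\<forall>u. is_complex_ctrl_solution G \<epsilon> \<tau> u {0..} \<longrightarrow> norm (u 0) \<le> \<rho> \<longrightarrow> (u \<longlongrightarrow> 0) at_top))"

theorem complex_ctrl_stable_at_0I:
  fixes G :: "complex \<Rightarrow> complex"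
  assumes \<tau>: "\<tau> > 0" and Re_nonneg: "0 \<le> Re \<alpha>" and monodromy: "norm (monodromy \<tau> \<alpha> \<epsilon>) < 1"
    and near_linear: "\<And>\<eta>. \<eta> > 0 \<Longrightarrow> \<exists>r>0. \<forall>z. norm z \<le> r \<longrightarrow> norm (G z - \<alpha> * z) \<le> \<eta> * norm z"
    and lip: "L-lipschitz_on (cball 0 r\<^sub>L) G" and r\<^sub>L: "r\<^sub>L > 0"
  shows "complex_ctrl_stable_at_0 G \<epsilon> \<tau>"
proof -
  obtain \<eta> where \<eta>: "0 < \<eta>" "\<eta> \<le> 1"
    and contracting: "norm (monodromy \<tau> \<alpha> \<epsilon>) + exp (3 * \<tau> * Re \<alpha>) * \<eta> * ctrl_drift_const \<tau> \<epsilon> < 1"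
    using contracting_size_exists[OF \<tau> monodromy] by blast
  obtain r0 where r0: "r0 > 0" "\<And>z. norm z \<le> r0 \<Longrightarrow> norm (G z - \<alpha> * z) \<le> \<eta> * norm z"
    using near_linear[OF \<eta>(1)] by blast
  define r where "r = min r0 r\<^sub>L"
  have r: "r > 0" using r0 r\<^sub>L by (simp add: r_def)
  interpret G: near_linear_ctrl \<tau> \<alpha> \<epsilon> G \<eta> r
    using \<tau> Re_nonneg \<eta> r r0 by unfold_locales (auto simp: r_def)
  define Gt where "Gt z = G (closest_point (cball 0 r) z)" for z
  have Gt_eq: "Gt z = G z" if "norm z \<le> r" for z
    using that closest_point_self[of z "cball 0 r"] by (simp add: Gt_def)
  have Gt_lip: "L-lipschitz_on UNIV Gt"
    unfolding Gt_def using r by (intro lipschitz_on_UNIV_comp_closest_point lipschitz_on_subset[OF lip])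
      (auto simp: r_def)
  interpret Gt: near_linear_ctrl \<tau> \<alpha> \<epsilon> Gt \<eta> r
    using \<tau> Re_nonneg \<eta> r G.near_linear Gt_eq by unfold_locales auto
  define C where "C = period_growth_const \<tau> \<alpha> \<epsilon>"
  have C: "C > 0" using period_growth_const_pos[OF \<tau>] by (simp add: C_def)
  show ?thesis
    unfolding complex_ctrl_stable_at_0_def
  proof (rule exI[of _ "r / (2 * C)"], intro conjI exI[of _ C] allI impI)
    show "r / (2 * C) > 0" "C > 0" using r C by simp_all
  next
    fix z :: complex assume z: "norm z \<le> r / (2 * C)"
    obtain u where u: "is_complex_ctrl_solution Gt \<epsilon> \<tau> u {0..}" "u 0 = z"
      using complex_ctrl_solution_exists[OF Gt_lip \<tau>] by blast
    have "norm (u t) \<le> r" if "t \<in> {0..}" for t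
    proof -
      have "norm (u t) \<le> C * norm (u 0)"
        using Gt.solution_bounded[OF u(1) _ _ _ _ that] contracting z u(2) by (auto simp: C_def)
      also have "\<dots> \<le> C * (r / (2 * C))" using z u(2) C by (intro mult_left_mono) auto
      finally show ?thesis using C r by simp
    qed
    then have "is_complex_ctrl_solution G \<epsilon> \<tau> u {0..}"
      using u(1) Gt_eq is_complex_ctrl_solution_cong[of "{0..}" G u Gt] by simp
    then show "\<exists>u. is_complex_ctrl_solution G \<epsilon> \<tau> u {0..} \<and> u 0 = z" using u(2) by blast
  next
    fix T u t assume "is_complex_ctrl_solution G \<epsilon> \<tau> u {0..<T}" "norm (u 0) \<le> r / (2 * C)" "t \<in> {0..<T}"
    moreover have "{0..s} \<subseteq> {0..<T}" if "s \<in> {0..<T}" for s using that by auto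
    ultimately show "norm (u t) \<le> C * norm (u 0)"
      using G.solution_bounded[of u "{0..<T}"] contracting by (simp add: C_def)
  next
    fix u assume "is_complex_ctrl_solution G \<epsilon> \<tau> u {0..}" "norm (u 0) \<le> r / (2 * C)"
    then show "(u \<longlongrightarrow> 0) at_top"
      using G.solution_tendsto_zero contracting by (simp add: C_def)
  qed
qed

section \<open>Complex coordinates in the plane\<close>

locale complex_coordinates =
  fixes P :: "real^2 \<Rightarrow> complex" and Q :: "complex \<Rightarrow> real^2"
  assumes bounded_linear_P: "bounded_linear P" and bounded_linear_Q: "bounded_linear Q"
    and Q_P [simp]: "\<And>y. Q (P y) = y" and P_Q [simp]: "\<And>z. P (Q z) = z"
begin

lemma has_vector_derivative_coord_iff:
  "((\<lambda>t. P (x t - c)) has_vector_derivative P D) F \<longleftrightarrow> (x has_vector_derivative D) F"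
proof
  assume "((\<lambda>t. P (x t - c)) has_vector_derivative P D) F"
  from bounded_linear.has_vector_derivative[OF bounded_linear_Q this]
  have "((\<lambda>t. x t - c) has_vector_derivative D) F" by simp
  from has_vector_derivative_add[OF this has_vector_derivative_const[of c]]
  show "(x has_vector_derivative D) F" by simp
next
  assume "(x has_vector_derivative D) F"
  from has_vector_derivative_diff[OF this has_vector_derivative_const[of c]]
  have "((\<lambda>t. x t - c) has_vector_derivative D) F" by simp
  from bounded_linear.has_vector_derivative[OF bounded_linear_P this]
  show "((\<lambda>t. P (x t - c)) has_vector_derivative P D) F" .
qed

lemma continuous_on_coord_iff: "continuous_on S (\<lambda>t. P (x t - c)) \<longleftrightarrow> continuous_on S x"
proof
  assume "continuous_on S (\<lambda>t. P (x t - c))"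
  from continuous_on_add[OF continuous_on_const[of _ c] bounded_linear.continuous_on[OF bounded_linear_Q this]]
  show "continuous_on S x" by simp
qed (intro bounded_linear.continuous_on[OF bounded_linear_P] continuous_intros)

context
  fixes f :: "real^2 \<Rightarrow> real^2" and K :: "real^2^2" and \<epsilon> :: complex
    and G :: "complex \<Rightarrow> complex" and xs :: "real^2"
  assumes P_K: "\<And>y. P (K *v y) = \<epsilon> * P y" and G: "\<And>z. G z = P (f (xs + Q z))"
begin

lemma is_ctrl_solution_iff_complex:
  "is_ctrl_solution f K \<tau> x S \<longleftrightarrow> is_complex_ctrl_solution G \<epsilon> \<tau> (\<lambda>t. P (x t - xs)) S"
proof -
  interpret P: bounded_linear P by (rule bounded_linear_P)
  have "P (f (x t) + ctrl_gain K \<tau> t *v (x (t - 2 * \<tau>) - x (t - \<tau>))) =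
      G (P (x t - xs)) + (if gain_active \<tau> t then \<epsilon> else 0) * (P (x (t - 2 * \<tau>) - xs) - P (x (t - \<tau>) - xs))"
    for t
    by (simp add: G ctrl_gain_eq P_K P.add P.diff[symmetric])
  then show ?thesis
    unfolding is_ctrl_solution_def is_complex_ctrl_solution_def continuous_on_coord_iff
      has_vector_derivative_coord_iff[of x xs, symmetric]
    by simp
qed

lemma loc_asym_stable_of_complex:
  assumes "complex_ctrl_stable_at_0 G \<epsilon> \<tau>"
  shows "loc_asym_stable f K \<tau> xs"
proof -
  obtain \<rho> C where \<rho>: "\<rho> > 0" and C: "C > 0"
    and exist: "\<And>z. norm z \<le> \<rho> \<Longrightarrow> \<exists>u. is_complex_ctrl_solution G \<epsilon> \<tau> u {0..} \<and> u 0 = z"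
    and bounded: "\<And>T u t. is_complex_ctrl_solution G \<epsilon> \<tau> u {0..<T} \<Longrightarrow> norm (u 0) \<le> \<rho> \<Longrightarrow>
      t \<in> {0..<T} \<Longrightarrow> norm (u t) \<le> C * norm (u 0)"
    and converge: "\<And>u. is_complex_ctrl_solution G \<epsilon> \<tau> u {0..} \<Longrightarrow> norm (u 0) \<le> \<rho> \<Longrightarrow>
      (u \<longlongrightarrow> 0) at_top"
    using assms unfolding complex_ctrl_stable_at_0_def by metis
  obtain nP where nP: "nP > 0" "\<And>y. norm (P y) \<le> norm y * nP"
    using bounded_linear.pos_bounded[OF bounded_linear_P] by blast
  obtain nQ where nQ: "nQ > 0" "\<And>z. norm (Q z) \<le> norm z * nQ"
    using bounded_linear.pos_bounded[OF bounded_linear_Q] by blast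
  have small: "norm (P (x0 - xs)) \<le> \<rho>" if "norm (x0 - xs) < \<rho> / nP" for x0
    using nP(2)[of "x0 - xs"] that nP(1) by (simp add: field_simps)
  show ?thesis
    unfolding loc_asym_stable_def
  proof (intro conjI allI impI)
    fix \<eta> :: real assume \<eta>: "\<eta> > 0"
    define \<delta> where "\<delta> = min (\<rho> / nP) (\<eta> / (C * nP * nQ))"
    show "\<exists>\<delta>>0. \<forall>x0. norm (x0 - xs) < \<delta> \<longrightarrow>
        (\<exists>x. is_ctrl_solution f K \<tau> x {0..} \<and> x 0 = x0) \<and>
        (\<forall>T x. T > 0 \<and> is_ctrl_solution f K \<tau> x {0..<T} \<and> x 0 = x0 \<longrightarrow>
          (\<forall>t\<in>{0..<T}. norm (x t - xs) < \<eta>))"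
    proof (intro exI[of _ \<delta>] conjI allI impI ballI)
      show "\<delta> > 0" using \<rho> \<eta> C nP nQ by (simp add: \<delta>_def)
      fix x0 assume x0: "norm (x0 - xs) < \<delta>"
      then have z: "norm (P (x0 - xs)) \<le> \<rho>" by (intro small) (simp add: \<delta>_def)
      then obtain u where u: "is_complex_ctrl_solution G \<epsilon> \<tau> u {0..}" "u 0 = P (x0 - xs)"
        using exist by blast
      then have "is_ctrl_solution f K \<tau> (\<lambda>t. xs + Q (u t)) {0..}"
        by (simp add: is_ctrl_solution_iff_complex)
      then show "\<exists>x. is_ctrl_solution f K \<tau> x {0..} \<and> x 0 = x0" using u(2) by force
      fix T x t assume x: "T > 0 \<and> is_ctrl_solution f K \<tau> x {0..<T} \<and> x 0 = x0" and t: "t \<in> {0..<T}"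
      then have "norm (P (x t - xs)) \<le> C * norm (P (x0 - xs))"
        using bounded[of "\<lambda>t. P (x t - xs)" T t] z by (simp add: is_ctrl_solution_iff_complex)
      then have "norm (x t - xs) \<le> C * norm (P (x0 - xs)) * nQ"
        using nQ(2)[of "P (x t - xs)"] nQ(1) by (simp add: mult_right_mono order_trans)
      also have "\<dots> \<le> C * (norm (x0 - xs) * nP) * nQ"
        using nP(2)[of "x0 - xs"] C nQ(1) by (intro mult_right_mono mult_left_mono) auto
      also have "\<dots> < C * (\<delta> * nP) * nQ"
        using x0 C nP(1) nQ(1) by (intro mult_strict_right_mono mult_strict_left_mono) auto
      also have "\<dots> \<le> \<eta>" using C nP(1) nQ(1) by (simp add: \<delta>_def min_def field_simps)
      finally show "norm (x t - xs) < \<eta>" .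
    qed
  next
    show "\<exists>\<delta>0>0. \<forall>x. is_ctrl_solution f K \<tau> x {0..} \<and> norm (x 0 - xs) < \<delta>0 \<longrightarrow> (x \<longlongrightarrow> xs) at_top"
    proof (intro exI[of _ "\<rho> / nP"] conjI allI impI)
      show "\<rho> / nP > 0" using \<rho> nP by simp
      fix x assume x: "is_ctrl_solution f K \<tau> x {0..} \<and> norm (x 0 - xs) < \<rho> / nP"
      then have "((\<lambda>t. P (x t - xs)) \<longlongrightarrow> 0) at_top"
        using converge small by (simp add: is_ctrl_solution_iff_complex)
      from tendsto_add[OF tendsto_const bounded_linear.tendsto[OF bounded_linear_Q this], of xs]
      show "(x \<longlongrightarrow> xs) at_top" using linear_0[OF bounded_linear.linear[OF bounded_linear_Q]] by simp
    qed
  qed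
qed

end

end

definition complex_of_vec :: "real^2 \<Rightarrow> complex" where
  "complex_of_vec y = Complex (y $ 1) (y $ 2)"

definition vec_of_complex :: "complex \<Rightarrow> real^2" where
  "vec_of_complex z = vector [Re z, Im z]"

lemma complex_of_vec_of_complex [simp]: "complex_of_vec (vec_of_complex z) = z"
  by (simp add: complex_of_vec_def vec_of_complex_def complex_eq_iff)

lemma vec_of_complex_of_vec [simp]: "vec_of_complex (complex_of_vec y) = y"
  by (simp add: complex_of_vec_def vec_of_complex_def vec_eq_iff forall_2)

lemma bounded_linear_complex_of_vec: "bounded_linear complex_of_vec"
  unfolding linear_conv_bounded_linear[symmetric]
  by (rule linearI) (simp_all add: complex_of_vec_def complex_eq_iff scaleR_complex.ctr)

lemma bounded_linear_vec_of_complex: "bounded_linear vec_of_complex"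
  unfolding linear_conv_bounded_linear[symmetric]
  by (rule linearI) (simp_all add: vec_of_complex_def vec_eq_iff forall_2)

lemma complex_of_vec_rotation:
  "complex_of_vec (vector [vector [a, -b], vector [b, a]] *v y) = Complex a b * complex_of_vec y"
  by (simp add: complex_of_vec_def matrix_vector_mult_def sum_2 complex_eq_iff)

lemma matrix_inv_cancel:
  fixes V :: "'a::semiring_1^'n^'n"
  assumes "invertible V"
  shows "V ** matrix_inv V = mat 1" "matrix_inv V ** V = mat 1"
proof -
  have "\<exists>W. V ** W = mat 1 \<and> W ** V = mat 1" using assms by (simp add: invertible_def)
  then have "V ** matrix_inv V = mat 1 \<and> matrix_inv V ** V = mat 1"
    unfolding matrix_inv_def by (rule someI_ex)
  then show "V ** matrix_inv V = mat 1" "matrix_inv V ** V = mat 1" by auto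
qed

lemma complex_of_vec_similar_rotation:
  fixes V :: "real^2^2"
  assumes "invertible V"
  shows "complex_of_vec (V *v ((matrix_inv V ** vector [vector [a, -b], vector [b, a]] ** V) *v y))
    = Complex a b * complex_of_vec (V *v y)"
proof -
  have "V *v (matrix_inv V *v w) = w" for w
    using matrix_inv_cancel[OF assms] by (simp add: matrix_vector_mul_assoc)
  then show ?thesis by (simp add: matrix_vector_mul_assoc[symmetric] complex_of_vec_rotation)
qed

lemma complex_coordinates_matrix:
  fixes V :: "real^2^2"
  assumes "invertible V"
  shows "complex_coordinates (\<lambda>y. complex_of_vec (V *v y)) (\<lambda>z. matrix_inv V *v vec_of_complex z)"
proof (rule complex_coordinates.intro)
  show "bounded_linear (\<lambda>y. complex_of_vec (V *v y))"
    by (intro bounded_linear_compose[OF bounded_linear_complex_of_vec] matrix_vector_mul_bounded_linear)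
  show "bounded_linear (\<lambda>z. matrix_inv V *v vec_of_complex z)"
    by (intro bounded_linear_compose[OF matrix_vector_mul_bounded_linear] bounded_linear_vec_of_complex)
qed (simp_all add: matrix_vector_mul_assoc matrix_inv_cancel[OF assms])

context complex_coordinates
begin

context
  fixes f :: "real^2 \<Rightarrow> real^2" and G :: "complex \<Rightarrow> complex" and xs :: "real^2"
  assumes G: "\<And>z. G z = P (f (xs + Q z))"
begin

lemma has_derivative_coord_map:
  assumes "(f has_derivative (\<lambda>h. A *v h)) (at xs)"
  shows "(G has_derivative (\<lambda>z. P (A *v Q z))) (at 0)"
proof -
  have "((\<lambda>z. xs + Q z) has_derivative Q) (at 0)"
    using bounded_linear_Q by (auto intro!: derivative_eq_intros bounded_linear_imp_has_derivative)
  moreover have "Q 0 = 0" using linear_0[OF bounded_linear.linear[OF bounded_linear_Q]] .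
  ultimately have "((\<lambda>z. f (xs + Q z)) has_derivative (\<lambda>z. A *v Q z)) (at 0)"
    using has_derivative_compose[of "\<lambda>z. xs + Q z" Q 0 UNIV f] assms by simp
  from has_derivative_compose[OF this bounded_linear_imp_has_derivative[OF bounded_linear_P]]
  show ?thesis by (simp add: G[abs_def])
qed

lemma near_linear_coord_map:
  assumes "(f has_derivative (\<lambda>h. A *v h)) (at xs)" "f xs = 0"
    and "\<And>z. P (A *v Q z) = \<alpha> * z" and "\<eta> > 0"
  shows "\<exists>r>0. \<forall>z. norm z \<le> r \<longrightarrow> norm (G z - \<alpha> * z) \<le> \<eta> * norm z"
proof -
  have "(G has_derivative (\<lambda>z. \<alpha> * z)) (at 0)"
    using has_derivative_coord_map[OF assms(1)] assms(3) by simp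
  moreover have "G 0 = 0"
    using assms(2) linear_0[OF bounded_linear.linear[OF bounded_linear_P]]
      linear_0[OF bounded_linear.linear[OF bounded_linear_Q]] by (simp add: G)
  ultimately show ?thesis using near_linear_of_has_derivative[of G _ \<eta>] assms(4) by simp
qed

lemma lipschitz_near_0_coord_map:
  assumes "L-lipschitz_on (cball xs r) f" "r > 0"
  obtains r' L' where "r' > 0" "L'-lipschitz_on (cball 0 r') G"
proof -
  obtain nQ where nQ: "nQ > 0" "\<And>z. norm (Q z) \<le> norm z * nQ"
    using bounded_linear.pos_bounded[OF bounded_linear_Q] by blast
  obtain LP where LP: "LP-lipschitz_on UNIV P"
    using bounded_linear.lipschitz_boundE[OF bounded_linear_P] by blast
  interpret Q: bounded_linear Q by (rule bounded_linear_Q)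
  have "nQ-lipschitz_on (cball 0 (r / nQ)) (\<lambda>z. xs + Q z)"
    using nQ by (intro lipschitz_onI) (auto simp: dist_norm Q.diff[symmetric] mult.commute)
  moreover have "norm (Q z) \<le> r" if "norm z \<le> r / nQ" for z
    using nQ(2)[of z] nQ(1) that by (simp add: field_simps)
  then have "(\<lambda>z. xs + Q z) ` cball 0 (r / nQ) \<subseteq> cball xs r" by (auto simp: dist_norm)
  ultimately have "(L * nQ)-lipschitz_on (cball 0 (r / nQ)) (\<lambda>z. f (xs + Q z))"
    using lipschitz_on_compose2 lipschitz_on_subset[OF assms(1)] by blast
  then have "(LP * (L * nQ))-lipschitz_on (cball 0 (r / nQ)) G"
    using lipschitz_on_compose2[of "L * nQ" _ "\<lambda>z. f (xs + Q z)" LP P]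
      lipschitz_on_subset[OF LP] by (auto simp: G[abs_def])
  then show ?thesis using that[of "r / nQ"] assms(2) nQ(1) by simp
qed

end

end

section \<open>The gain formula\<close>

text \<open>The gain of the theorem is \<open>(\<rho> e\<^sup>i\<^sup>\<theta> - e\<^sup>3\<^sup>\<alpha>\<^sup>\<tau>) / (\<tau> (e\<^sup>\<alpha>\<^sup>\<tau> - e\<^sup>2\<^sup>\<alpha>\<^sup>\<tau>))\<close> with
  numerator and denominator multiplied by the conjugate of \<open>e\<^sup>\<alpha>\<^sup>\<tau> (1 - e\<^sup>\<alpha>\<^sup>\<tau>)\<close>;
  here \<open>e\<^sup>\<alpha>\<^sup>\<tau> = e w\<close> with \<open>e\<close> real and \<open>|w| = 1\<close>.\<close>

lemma monodromy_identity:
  fixes e w z r t :: complex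
  assumes "w \<noteq> 0" "e \<noteq> 0" "t \<noteq> 0" "1 - e * w \<noteq> 0" "w - e \<noteq> 0"
  shows "(r * z / w - r * e * z / w\<^sup>2 - e ^ 3 * w\<^sup>2 + e ^ 4 * w) / (t * e * ((1 - e * w) * (1 - e / w)))
      * (t * (e * w - e\<^sup>2 * w\<^sup>2)) = r * z - e ^ 3 * w ^ 3"
proof -
  let ?N = "r * z / w - r * e * z / w\<^sup>2 - e ^ 3 * w\<^sup>2 + e ^ 4 * w"
  let ?D = "t * e * ((1 - e * w) * (1 - e / w))"
  have "1 - e / w \<noteq> 0" using assms by (auto simp: field_simps)
  then have D: "?D \<noteq> 0" using assms by simp
  have "?N / ?D * (t * (e * w - e\<^sup>2 * w\<^sup>2)) = ?N * (t * (e * w - e\<^sup>2 * w\<^sup>2)) / ?D"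
    by (rule times_divide_eq_left)
  also have "?N * (t * (e * w - e\<^sup>2 * w\<^sup>2)) = (r * z - e ^ 3 * w ^ 3) * ?D"
    using assms(1) by (simp add: field_simps) algebra
  finally show ?thesis using D by simp
qed

lemma monodromy_paper_gain:
  fixes \<mu> \<omega> \<tau> \<rho> \<theta> :: real
  assumes \<mu>: "\<mu> > 0" and \<tau>: "\<tau> > 0"
  defines "den \<equiv> \<tau> * exp (\<mu> * \<tau>) * (1 - 2 * exp (\<mu> * \<tau>) * cos (\<omega> * \<tau>) + exp (2 * \<mu> * \<tau>))"
  defines "\<epsilon>1 \<equiv> (\<rho> * cos (\<theta> - \<omega> * \<tau>) - \<rho> * exp (\<mu> * \<tau>) * cos (\<theta> - 2 * \<omega> * \<tau>)
                 - exp (3 * \<mu> * \<tau>) * cos (2 * \<omega> * \<tau>) + exp (4 * \<mu> * \<tau>) * cos (\<omega> * \<tau>)) / den"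
  defines "\<epsilon>2 \<equiv> (\<rho> * sin (\<theta> - \<omega> * \<tau>) - \<rho> * exp (\<mu> * \<tau>) * sin (\<theta> - 2 * \<omega> * \<tau>)
                 - exp (3 * \<mu> * \<tau>) * sin (2 * \<omega> * \<tau>) + exp (4 * \<mu> * \<tau>) * sin (\<omega> * \<tau>)) / den"
  shows "monodromy \<tau> (Complex \<mu> \<omega>) (Complex \<epsilon>1 \<epsilon>2) = \<rho> * cis \<theta>"
proof -
  define E where "E = exp (\<mu> * \<tau>)"
  define e where "e = complex_of_real E"
  define w where "w = cis (\<omega> * \<tau>)"
  define z where "z = cis \<theta>"
  have E: "E > 1" using \<mu> \<tau> by (simp add: E_def)
  have exp_pow: "exp (real n * \<mu> * \<tau>) = E ^ n" for n
    using exp_of_nat_mult[of n "\<mu> * \<tau>"] by (simp add: E_def mult.assoc)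
  have w: "w \<noteq> 0" "norm w = 1" by (simp_all add: w_def)
  have exp_\<alpha>: "exp ((real n * \<tau>) *\<^sub>R Complex \<mu> \<omega>) = e ^ n * w ^ n" for n
  proof -
    have "exp ((real n * \<tau>) *\<^sub>R Complex \<mu> \<omega>) = exp (real n * \<tau> * \<mu>) * cis (real n * \<tau> * \<omega>)"
      by (rule exp_scaleR_Complex)
    also have "exp (real n * \<tau> * \<mu>) = E ^ n" using exp_pow[of n] by (simp add: mult_ac)
    also have "cis (real n * \<tau> * \<omega>) = w ^ n" unfolding w_def Complex.DeMoivre by (simp add: mult_ac)
    finally show ?thesis by (simp add: e_def)
  qed
  have cis: "cis (\<theta> - \<omega> * \<tau>) = z / w" "cis (\<theta> - 2 * \<omega> * \<tau>) = z / w\<^sup>2"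
    "cis (2 * \<omega> * \<tau>) = w\<^sup>2" "cis (\<omega> * \<tau>) = w"
    by (simp_all add: z_def w_def cis_divide Complex.DeMoivre algebra_simps)
  have "(1 - E)\<^sup>2 \<le> 1 - 2 * E * cos (\<omega> * \<tau>) + E\<^sup>2"
    using E by (simp add: power2_eq_square algebra_simps)
  moreover have "(1 - E)\<^sup>2 > 0" using E by simp
  ultimately have den: "den = \<tau> * E * (1 - 2 * E * cos (\<omega> * \<tau>) + E\<^sup>2)" "den \<noteq> 0"
    using exp_pow[of 2] \<tau> E by (auto simp: den_def E_def)
  have "w + 1 / w = 2 * cos (\<omega> * \<tau>)"
    by (simp add: w_def complex_eq_iff cis_divide[of 0, simplified])
  moreover have "(1 - e * w) * (1 - e / w) = 1 - e * (w + 1 / w) + e\<^sup>2"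
    using w(1) by (simp add: field_simps power2_eq_square)
  ultimately have "(1 - e * w) * (1 - e / w) = complex_of_real (1 - 2 * E * cos (\<omega> * \<tau>) + E\<^sup>2)"
    by (simp add: e_def)
  then have den_factor: "complex_of_real den = \<tau> * e * ((1 - e * w) * (1 - e / w))"
    by (simp add: den(1) e_def)
  have "Complex \<epsilon>1 \<epsilon>2 =
      (\<rho> * cis (\<theta> - \<omega> * \<tau>) - \<rho> * e * cis (\<theta> - 2 * \<omega> * \<tau>) - e ^ 3 * cis (2 * \<omega> * \<tau>) + e ^ 4 * cis (\<omega> * \<tau>))
      / complex_of_real den"
    using exp_pow[of 3] exp_pow[of 4]
    by (simp add: complex_eq_iff \<epsilon>1_def \<epsilon>2_def e_def E_def)
  also have "\<dots> = (\<rho> * z / w - \<rho> * e * z / w\<^sup>2 - e ^ 3 * w\<^sup>2 + e ^ 4 * w) / (\<tau> * e * ((1 - e * w) * (1 - e / w)))"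
    by (simp add: cis den_factor)
  finally have \<epsilon>: "Complex \<epsilon>1 \<epsilon>2 = \<dots>" .
  have "norm (e * w) = E" "norm e = E" using w E by (simp_all add: e_def norm_mult)
  then have "1 - e * w \<noteq> 0" "w - e \<noteq> 0" using E w(2) by auto
  then have "Complex \<epsilon>1 \<epsilon>2 * (\<tau> * (e * w - e\<^sup>2 * w\<^sup>2)) = \<rho> * z - e ^ 3 * w ^ 3"
    unfolding \<epsilon> using w E \<tau> by (intro monodromy_identity) (auto simp: e_def)
  then show ?thesis
    using exp_\<alpha>[of 1] exp_\<alpha>[of 2] exp_\<alpha>[of 3]
    by (simp add: monodromy_def z_def power2_eq_square algebra_simps)
qed


theorem mainTheorem3:
  fixes f :: "real^2 \<Rightarrow> real^2" and xs :: "real^2" and V :: "real^2^2"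
    and \<mu> \<omega> \<tau> \<rho> \<theta> :: real
  assumes eq: "f xs = 0"
    and C1: "\<exists>U Df. open U \<and> xs \<in> U \<and> continuous_on U Df \<and>
               (\<forall>y\<in>U. (f has_derivative (\<lambda>h. Df y *v h)) (at y)) \<and>
               Df xs = matrix_inv V ** vector [vector [\<mu>, -\<omega>], vector [\<omega>, \<mu>]] ** V"
    and V: "invertible V"
    and mu: "\<mu> > 0" and om: "\<omega> \<noteq> 0"
    and tau: "\<tau> > 0" and rho: "0 \<le> \<rho>" "\<rho> < 1"
    and theta: "0 \<le> \<theta>" "\<theta> < 2 * pi"
  defines "den \<equiv> \<tau> * exp (\<mu> * \<tau>) * (1 - 2 * exp (\<mu> * \<tau>) * cos (\<omega> * \<tau>) + exp (2 * \<mu> * \<tau>))"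
  defines "\<epsilon>1 \<equiv> (\<rho> * cos (\<theta> - \<omega> * \<tau>) - \<rho> * exp (\<mu> * \<tau>) * cos (\<theta> - 2 * \<omega> * \<tau>)
                 - exp (3 * \<mu> * \<tau>) * cos (2 * \<omega> * \<tau>) + exp (4 * \<mu> * \<tau>) * cos (\<omega> * \<tau>)) / den"
  defines "\<epsilon>2 \<equiv> (\<rho> * sin (\<theta> - \<omega> * \<tau>) - \<rho> * exp (\<mu> * \<tau>) * sin (\<theta> - 2 * \<omega> * \<tau>)
                 - exp (3 * \<mu> * \<tau>) * sin (2 * \<omega> * \<tau>) + exp (4 * \<mu> * \<tau>) * sin (\<omega> * \<tau>)) / den"
  defines "K \<equiv> matrix_inv V ** vector [vector [\<epsilon>1, -\<epsilon>2], vector [\<epsilon>2, \<epsilon>1]] ** V"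
  shows "loc_asym_stable f K \<tau> xs"
proof -
  obtain U Df where U: "open U" "xs \<in> U" "continuous_on U Df"
    and f_der: "\<forall>y\<in>U. (f has_derivative (\<lambda>h. Df y *v h)) (at y)"
    and Df_xs: "Df xs = matrix_inv V ** vector [vector [\<mu>, -\<omega>], vector [\<omega>, \<mu>]] ** V"
    using C1 by blast
  define P where "P = (\<lambda>y. complex_of_vec (V *v y))"
  define Q where "Q = (\<lambda>z. matrix_inv V *v vec_of_complex z)"
  define G where "G z = P (f (xs + Q z))" for z
  interpret complex_coordinates P Q
    unfolding P_def Q_def by (rule complex_coordinates_matrix[OF V])
  have near_linear: "\<exists>r>0. \<forall>z. norm z \<le> r \<longrightarrow> norm (G z - Complex \<mu> \<omega> * z) \<le> \<eta> * norm z"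
    if "\<eta> > 0" for \<eta>
    using near_linear_coord_map[where f=f and xs=xs, OF G_def f_der[rule_format, OF U(2)] eq _ that]
      complex_of_vec_similar_rotation[OF V] P_Q by (simp add: Df_xs P_def)
  obtain r L where "r > 0" "L-lipschitz_on (cball xs r) f"
    using lipschitz_on_cball_of_continuous_derivative[OF U f_der] by blast
  then obtain r' L' where "r' > 0" "L'-lipschitz_on (cball 0 r') G"
    using lipschitz_near_0_coord_map[where f=f and xs=xs, OF G_def] by blast
  moreover have "norm (monodromy \<tau> (Complex \<mu> \<omega>) (Complex \<epsilon>1 \<epsilon>2)) < 1"
    using monodromy_paper_gain[OF mu tau, of \<omega> \<rho> \<theta>] rho by (simp add: den_def \<epsilon>1_def \<epsilon>2_def norm_mult)
  ultimately have "complex_ctrl_stable_at_0 G (Complex \<epsilon>1 \<epsilon>2) \<tau>"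
    using tau mu near_linear by (intro complex_ctrl_stable_at_0I) auto
  moreover have "P (K *v y) = Complex \<epsilon>1 \<epsilon>2 * P y" for y
    using complex_of_vec_similar_rotation[OF V] by (simp add: K_def P_def)
  ultimately show ?thesis
    using loc_asym_stable_of_complex[where f=f and xs=xs and G=G, OF _ G_def] by blast
qed

end
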